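(* In the cyclic setting below, for all indices $i\neq j$ in $\{0,\dots,s\}$, $$c_{o_i,e_i}(\sigma_i\sigma_j^{-1})=\zeta^{\nu_i}.$$ (Here $\sigma_i\sigma_j^{-1}\in\Gamma$.)
   Context: $\mathbb{K}$ is a complete non-Archimedean valued field, algebraically closed, of characteristic $0$; $p$ is a prime and $\zeta$ a primitive $p$-th root of unity. $\Gamma\subset\mathrm{PGL}(2,\mathbb{K})$ is a Schottky group of rank $g$ with set of ordinary points $\Omega\ni\infty$, and $N(\Gamma)$ its normalizer. For $a,b\in\Omega$, $\Theta_{a,b}(z)=\prod_{\gamma\in\Gamma}\frac{z-\gamma a}{z-\gamma b}$, and $c_{a,b}:\Gamma\to\mathbb{K}^*$ is the homomorphism with $\Theta_{a,b}(\gamma z)=c_{a,b}(\gamma)\Theta_{a,b}(z)$. Cyclic setting: $\sigma_0\in N(\Gamma)$ satisfies $\sigma_0^p=\mathrm{id}$ and $\prod_{k=0}^{p-1}\sigma_0^k\gamma\sigma_0^{-k}\in[\Gamma,\Gamma]$ for all $\gamma\in\Gamma$; $\Gamma_0=\langle\Gamma,\sigma_0\rangle$. There are $\sigma_0,\sigma_1,\dots,\sigma_s\in\Gamma_0$ of order $p$ with $\Gamma_0$ the free product of the $\langle\sigma_i\rangle$, and the elements $\xi_{j,1}=\sigma_j\sigma_0^{-1}$, $\xi_{j,k}=\sigma_0\xi_{j,k-1}\sigma_0^{-1}$ ($j=1,\dots,s$; $k=2,\dots,p-1$) form a free basis of $\Gamma$. Each $\sigma_i=\upsilon_i^{-1}\mathrm{diag}(\zeta^{\nu_i},1)\upsilon_i$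 for some $\upsilon_i\in\mathrm{PGL}(2,\mathbb{K})$ and integer $\nu_i$; its fixed points $o_i=\upsilon_i^{-1}0$, $e_i=\upsilon_i^{-1}\infty$ are assumed to lie in $\Omega$. *)

theory Defs
  imports Complex_Main "HOL-Computational_Algebra.Polynomial"
begin

definition nonarch_abs :: "('k::field \<Rightarrow> real) \<Rightarrow> bool" where
  "nonarch_abs v \<longleftrightarrow>
     (\<forall>x. 0 \<le> v x) \<and> (\<forall>x. v x = 0 \<longleftrightarrow> x = 0) \<and>
     (\<forall>x y. v (x * y) = v x * v y) \<and>
     (\<forall>x y. v (x + y) \<le> max (v x) (v y)) \<and>
     (\<exists>x. v x \<noteq> 0 \<and> v x \<noteq> 1)"

definition complete_wrt :: "('k::field \<Rightarrow> real) \<Rightarrow> bool" where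
  "complete_wrt v \<longleftrightarrow>
     (\<forall>X::nat \<Rightarrow> 'k. (\<forall>e>0. \<exists>N. \<forall>m\<ge>N. \<forall>n\<ge>N. v (X m - X n) < e) \<longrightarrow>
        (\<exists>L. \<forall>e>0. \<exists>N. \<forall>n\<ge>N. v (X n - L) < e))"

definition alg_closed_field :: "'k::field itself \<Rightarrow> bool" where
  "alg_closed_field _ \<longleftrightarrow> (\<forall>q::'k poly. 0 < degree q \<longrightarrow> (\<exists>x. poly q x = 0))"

definition complete_nonarch_acf :: "('k::field_char_0 \<Rightarrow> real) \<Rightarrow> bool" where
  "complete_nonarch_acf v \<longleftrightarrow> nonarch_abs v \<and> complete_wrt v \<and> alg_closed_field TYPE('k)"

text \<open>P^1(K) is 'k option, with None the point at infinity. Elements of PGL(2,K) are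
  represented by the Moebius transformations they induce (the action is faithful);
  the group law is composition, matching the matrix product.\<close>

definition moeb :: "'k::field \<Rightarrow> 'k \<Rightarrow> 'k \<Rightarrow> 'k \<Rightarrow> 'k option \<Rightarrow> 'k option" where
  "moeb a b c d z = (case z of
      None \<Rightarrow> (if c = 0 then None else Some (a / c))
    | Some x \<Rightarrow> (if c * x + d = 0 then None else Some ((a * x + b) / (c * x + d))))"

definition PGL2 :: "('k::field option \<Rightarrow> 'k option) set" where
  "PGL2 = {moeb a b c d | a b c d. a * d - b * c \<noteq> 0}"

inductive_set mgen :: "('a \<Rightarrow> 'a) set \<Rightarrow> ('a \<Rightarrow> 'a) set" for S where
  gen_id: "id \<in> mgen S"
| gen_mul: "f \<in> S \<Longrightarrow> g \<in> mgen S \<Longrightarrow> f \<circ> g \<in> mgen S"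
| gen_inv: "f \<in> S \<Longrightarrow> g \<in> mgen S \<Longrightarrow> inv f \<circ> g \<in> mgen S"

definition commutator_subgroup :: "('a \<Rightarrow> 'a) set \<Rightarrow> ('a \<Rightarrow> 'a) set" where
  "commutator_subgroup G = mgen {a \<circ> b \<circ> inv a \<circ> inv b | a b. a \<in> G \<and> b \<in> G}"

definition normalizer :: "('k::field option \<Rightarrow> 'k option) set \<Rightarrow> ('k option \<Rightarrow> 'k option) set" where
  "normalizer G = {f \<in> PGL2. (\<lambda>g. f \<circ> g \<circ> inv f) ` G = G}"

definition word_eval :: "('i \<Rightarrow> 'a \<Rightarrow> 'a) \<Rightarrow> ('i \<times> bool) list \<Rightarrow> 'a \<Rightarrow> 'a" where
  "word_eval x w = foldr (\<lambda>(i, b) f. (if b then x i else inv (x i)) \<circ> f) w id"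

definition reduced_word :: "('i \<times> bool) list \<Rightarrow> bool" where
  "reduced_word w \<longleftrightarrow>
     (\<forall>n. Suc n < length w \<longrightarrow> \<not> (fst (w ! n) = fst (w ! Suc n) \<and> snd (w ! n) \<noteq> snd (w ! Suc n)))"

definition free_basis :: "('a \<Rightarrow> 'a) set \<Rightarrow> ('i \<Rightarrow> 'a \<Rightarrow> 'a) \<Rightarrow> 'i set \<Rightarrow> bool" where
  "free_basis G x I \<longleftrightarrow> G = mgen (x ` I) \<and>
     (\<forall>w. w \<noteq> [] \<and> fst ` set w \<subseteq> I \<and> reduced_word w \<longrightarrow> word_eval x w \<noteq> id)"

text \<open>G is the free product of the cyclic groups generated by sigma 0, ..., sigma s,
  each of order p (orders are assumed separately): every nonempty reduced word
  sigma_{i1}^{k1} ... sigma_{in}^{kn} (consecutive indices distinct, 0<k<p) is nontrivial.\<close>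
definition free_product_cyclic :: "nat \<Rightarrow> ('a \<Rightarrow> 'a) set \<Rightarrow> (nat \<Rightarrow> 'a \<Rightarrow> 'a) \<Rightarrow> nat \<Rightarrow> bool" where
  "free_product_cyclic p G \<sigma> s \<longleftrightarrow> G = mgen (\<sigma> ` {0..s}) \<and>
     (\<forall>w::(nat \<times> nat) list. w \<noteq> [] \<and> (\<forall>(i, k) \<in> set w. i \<le> s \<and> 0 < k \<and> k < p) \<and>
        (\<forall>n. Suc n < length w \<longrightarrow> fst (w ! n) \<noteq> fst (w ! Suc n)) \<longrightarrow>
        foldr (\<lambda>(i, k) f. (\<sigma> i ^^ k) \<circ> f) w id \<noteq> id)"

definition chord :: "('k::field \<Rightarrow> real) \<Rightarrow> 'k option \<Rightarrow> 'k option \<Rightarrow> real" where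
  "chord v x y = (case (x, y) of
      (Some a, Some b) \<Rightarrow> v (a - b) / (max 1 (v a) * max 1 (v b))
    | (Some a, None) \<Rightarrow> 1 / max 1 (v a)
    | (None, Some b) \<Rightarrow> 1 / max 1 (v b)
    | (None, None) \<Rightarrow> 0)"

definition limit_set :: "('k::field \<Rightarrow> real) \<Rightarrow> ('k option \<Rightarrow> 'k option) set \<Rightarrow> 'k option set" where
  "limit_set v G = {q. \<exists>x g. (\<forall>n. g n \<in> G) \<and> inj g \<and> (\<lambda>n. chord v (g n x) q) \<longlonglongrightarrow> 0}"

definition ordinary :: "('k::field \<Rightarrow> real) \<Rightarrow> ('k option \<Rightarrow> 'k option) set \<Rightarrow> 'k option set" where
  "ordinary v G = UNIV - limit_set v G"

text \<open>Discontinuous (Gerritzen--van der Put): Omega nonempty and every orbit has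
  compact closure (i.e. is relatively sequentially compact in the metric space P^1).\<close>
definition discontinuous_grp :: "('k::field \<Rightarrow> real) \<Rightarrow> ('k option \<Rightarrow> 'k option) set \<Rightarrow> bool" where
  "discontinuous_grp v G \<longleftrightarrow> ordinary v G \<noteq> {} \<and>
     (\<forall>x (g::nat \<Rightarrow> _). (\<forall>n. g n \<in> G) \<longrightarrow>
        (\<exists>r q. strict_mono r \<and> (\<lambda>n. chord v (g (r n) x) q) \<longlonglongrightarrow> 0))"

definition schottky :: "('k::field \<Rightarrow> real) \<Rightarrow> ('k option \<Rightarrow> 'k option) set \<Rightarrow> nat \<Rightarrow> bool" where
  "schottky v G rk \<longleftrightarrow> G \<subseteq> PGL2 \<and> (\<exists>S. finite S \<and> G = mgen S) \<and> discontinuous_grp v G \<and>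
     (\<forall>g\<in>G. \<forall>n>0. g ^^ n = id \<longrightarrow> g = id) \<and>
     (\<exists>x. free_basis G x {..<rk})"

definition theta_fac :: "'k::field \<Rightarrow> 'k option \<Rightarrow> 'k option \<Rightarrow> 'k" where
  "theta_fac z \<alpha> \<beta> = (case \<alpha> of None \<Rightarrow> 1 | Some x \<Rightarrow> z - x) /
                       (case \<beta> of None \<Rightarrow> 1 | Some y \<Rightarrow> z - y)"

text \<open>Unconditional convergence of the product over G (limit along finite subsets).\<close>
definition theta_has :: "('k::field \<Rightarrow> real) \<Rightarrow> ('k option \<Rightarrow> 'k option) set \<Rightarrow>
    'k option \<Rightarrow> 'k option \<Rightarrow> 'k \<Rightarrow> 'k \<Rightarrow> bool" where
  "theta_has v G a b z L \<longleftrightarrow>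
     (\<forall>e>0. \<exists>F0. finite F0 \<and> F0 \<subseteq> G \<and>
        (\<forall>F. finite F \<and> F0 \<subseteq> F \<and> F \<subseteq> G \<longrightarrow> v ((\<Prod>g\<in>F. theta_fac z (g a) (g b)) - L) < e))"

definition Theta :: "('k::field \<Rightarrow> real) \<Rightarrow> ('k option \<Rightarrow> 'k option) set \<Rightarrow>
    'k option \<Rightarrow> 'k option \<Rightarrow> 'k \<Rightarrow> 'k" where
  "Theta v G a b z = (THE L. theta_has v G a b z L)"

definition autfac :: "('k::field \<Rightarrow> real) \<Rightarrow> ('k option \<Rightarrow> 'k option) set \<Rightarrow>
    'k option \<Rightarrow> 'k option \<Rightarrow> ('k option \<Rightarrow> 'k option) \<Rightarrow> 'k" where
  "autfac v G a b g = (THE c. \<forall>z w. Some z \<in> ordinary v G \<and> g (Some z) = Some w \<longrightarrow>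
       Theta v G a b w = c * Theta v G a b z)"

fun xi :: "(nat \<Rightarrow> 'a \<Rightarrow> 'a) \<Rightarrow> nat \<Rightarrow> nat \<Rightarrow> 'a \<Rightarrow> 'a" where
  "xi \<sigma> j 0 = id"
| "xi \<sigma> j (Suc 0) = \<sigma> j \<circ> inv (\<sigma> 0)"
| "xi \<sigma> j (Suc (Suc k)) = \<sigma> 0 \<circ> xi \<sigma> j (Suc k) \<circ> inv (\<sigma> 0)"

end

theory Submission
  imports Defs
begin

(* Write a = o_i and b = e_i. Since sigma_i normalises Gamma and fixes a and b, reindexing the
   product for Theta_{a,b}(sigma_i z) by conjugation with sigma_i matches all factors except the
   one of the identity with those of Theta_{a,b}(z), up to a factor independent of z; evaluating
   at a or b shows that this factor is 1, and the identity factor contributes the ratio zeta^nu_i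
   of the multipliers of sigma_i at its fixed points. In the same way Theta_{a,b}(sigma_j^-1 z) =
   Theta_{a,b}(z), the constant now being evaluated at a fixed point f of sigma_j. There Theta_{a,b}
   does not vanish: an element of Gamma mapping a or b to f would conjugate sigma_i to sigma_j,
   which is impossible in the free product because the exponent sum of sigma_i modulo p is a
   conjugation invariant. Composing the two transformation rules gives the automorphy factor of
   sigma_i sigma_j^-1. All products converge because, Gamma being discontinuous, only finitely
   many of its elements move a given ordinary point close to another one. *)

section \<open>Non-Archimedean absolute values\<close>

locale nonarch_valuation =
  fixes v :: "'k::field_char_0 \<Rightarrow> real"
  assumes nonarch: "nonarch_abs v"
begin

lemma v_nonneg [simp]: "0 \<le> v x"
  using nonarch unfolding nonarch_abs_def by blast

lemma v_zero_iff [simp]: "v x = 0 \<longleftrightarrow> x = 0"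
  using nonarch unfolding nonarch_abs_def by blast

lemma v_0 [simp]: "v 0 = 0"
  by simp

lemma v_mult: "v (x * y) = v x * v y"
  using nonarch unfolding nonarch_abs_def by blast

lemma v_add: "v (x + y) \<le> max (v x) (v y)"
  using nonarch unfolding nonarch_abs_def by blast

lemma v_pos [simp]: "0 < v x \<longleftrightarrow> x \<noteq> 0"
  using v_nonneg[of x] v_zero_iff[of x] by linarith

lemma v_one [simp]: "v 1 = 1"
  using v_mult[of 1 1] by simp

lemma v_minus_one [simp]: "v (-1) = 1"
proof -
  have "(v (-1) - 1) * (v (-1) + 1) = 0"
    using v_mult[of "-1" "-1"] by (simp add: algebra_simps)
  moreover have "v (-1) + 1 \<noteq> 0"
    using v_nonneg[of "-1"] by linarith
  ultimately show ?thesis by simp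
qed

lemma v_uminus [simp]: "v (- x) = v x"
  using v_mult[of "-1" x] by simp

lemma v_diff_commute: "v (x - y) = v (y - x)"
  by (metis minus_diff_eq v_uminus)

lemma v_diff: "v (x - y) \<le> max (v x) (v y)"
  using v_add[of x "-y"] by simp

lemma v_inverse: "v (inverse x) = inverse (v x)"
  by (metis inverse_unique left_inverse v_mult v_one inverse_zero v_zero_iff)

lemma v_divide: "v (x / y) = v x / v y"
  by (simp add: divide_inverse v_mult v_inverse)

lemma v_add_le: "v x \<le> e \<Longrightarrow> v y \<le> e \<Longrightarrow> v (x + y) \<le> e"
  using v_add[of x y] by linarith

lemma v_add_less: "v x < e \<Longrightarrow> v y < e \<Longrightarrow> v (x + y) < e"
  using v_add[of x y] by linarith

lemma v_diff_le: "v x \<le> e \<Longrightarrow> v y \<le> e \<Longrightarrow> v (x - y) \<le> e"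
  using v_diff[of x y] by linarith

lemma v_diff_triangle: "v (x - z) \<le> max (v (x - y)) (v (y - z))"
  using v_add[of "x - y" "y - z"] by simp

lemma v_add_strict: "v y < v x \<Longrightarrow> v (x + y) = v x"
  using v_add[of x y] v_diff[of "x + y" y] by (simp add: max_def split: if_splits)

lemma v_eq_if_close: "v (x - y) < v y \<Longrightarrow> v x = v y"
  using v_add_strict[of "x - y" y] by (simp add: add.commute)

lemma v_eq_one_if_close_one: "v (x - 1) < 1 \<Longrightarrow> v x = 1"
  using v_eq_if_close[of x 1] by simp

end

section \<open>Moebius transformations as 2 by 2 matrices\<close>

type_synonym 'k mat2 = "'k \<times> 'k \<times> 'k \<times> 'k"

fun moeb_mat :: "'k::field mat2 \<Rightarrow> 'k option \<Rightarrow> 'k option" where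
  "moeb_mat (a, b, c, d) = moeb a b c d"

fun det2 :: "'k::field mat2 \<Rightarrow> 'k" where
  "det2 (a, b, c, d) = a * d - b * c"

fun mult2 :: "'k::field mat2 \<Rightarrow> 'k mat2 \<Rightarrow> 'k mat2" where
  "mult2 (a, b, c, d) (a', b', c', d') = (a*a' + b*c', a*b' + b*d', c*a' + d*c', c*b' + d*d')"

fun adj2 :: "'k::field mat2 \<Rightarrow> 'k mat2" where
  "adj2 (a, b, c, d) = (d, -b, -c, a)"

fun smult2 :: "'k::field \<Rightarrow> 'k mat2 \<Rightarrow> 'k mat2" where
  "smult2 l (a, b, c, d) = (l*a, l*b, l*c, l*d)"

fun apply2 :: "'k::field mat2 \<Rightarrow> 'k \<times> 'k \<Rightarrow> 'k \<times> 'k" where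
  "apply2 (a, b, c, d) (x, y) = (a*x + b*y, c*x + d*y)"

fun scale :: "'k::field \<Rightarrow> 'k \<times> 'k \<Rightarrow> 'k \<times> 'k" where
  "scale l (x, y) = (l * x, l * y)"

fun wedge :: "'k::field \<times> 'k \<Rightarrow> 'k \<times> 'k \<Rightarrow> 'k" where
  "wedge (x0, x1) (y0, y1) = x0 * y1 - x1 * y0"

text \<open>Infinity is represented by \<open>(-1, 0)\<close>, so that
  \<open>wedge (z, 1) (hcoord \<alpha>)\<close> is the factor \<open>z - \<alpha>\<close> of \<^const>\<open>theta_fac\<close>, including its
  convention for \<open>\<alpha> = \<infinity>\<close>.\<close>

definition hcoord :: "'k::field option \<Rightarrow> 'k \<times> 'k" where
  "hcoord y = (case y of None \<Rightarrow> (-1, 0) | Some x \<Rightarrow> (x, 1))"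

lemma hcoord_simps [simp]: "hcoord None = (-1, 0)" "hcoord (Some x) = (x, 1)"
  by (auto simp: hcoord_def)

lemma hcoord_nonzero [simp]: "hcoord y \<noteq> (0, 0)"
  by (cases y) auto

lemma scale_scale [simp]: "scale a (scale b u) = scale (a * b) u"
  by (cases u) auto

lemma scale_one [simp]: "scale 1 u = u"
  by (cases u) auto

lemma apply2_scale: "apply2 M (scale l u) = scale l (apply2 M u)"
  by (cases M; cases u) (auto simp: algebra_simps)

lemma apply2_mult2: "apply2 (mult2 N M) u = apply2 N (apply2 M u)"
  by (cases M; cases N; cases u) (auto simp: algebra_simps)

lemma mult2_assoc: "mult2 (mult2 A B) C = mult2 A (mult2 B C)"
  by (cases A; cases B; cases C) (auto simp: algebra_simps)

lemma det2_mult2: "det2 (mult2 N M) = det2 N * det2 M"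
  by (cases M; cases N) (auto simp: algebra_simps)

lemma det2_adj2 [simp]: "det2 (adj2 M) = det2 M"
  by (cases M) (auto simp: algebra_simps)

lemma adj2_adj2 [simp]: "adj2 (adj2 M) = M"
  by (cases M) auto

lemma det2_smult2: "det2 (smult2 l M) = l^2 * det2 M"
  by (cases M) (auto simp: algebra_simps power2_eq_square)

lemma mult2_adj2_left: "mult2 (adj2 M) M = (det2 M, 0, 0, det2 M)"
  by (cases M) (auto simp: algebra_simps)

lemma mult2_adj2_right: "mult2 M (adj2 M) = (det2 M, 0, 0, det2 M)"
  by (cases M) (auto simp: algebra_simps)

lemma apply2_adj2_apply2: "apply2 (adj2 M) (apply2 M u) = scale (det2 M) u"
  by (cases M; cases u) (auto simp: algebra_simps)

lemma apply2_apply2_adj2: "apply2 M (apply2 (adj2 M) u) = scale (det2 M) u"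
  using apply2_adj2_apply2[of "adj2 M" u] by simp

lemma wedge_apply2: "wedge (apply2 M u) (apply2 M w) = det2 M * wedge u w"
  by (cases M; cases u; cases w) (auto simp: algebra_simps)

lemma wedge_adj2: "wedge (apply2 (adj2 M) u) w = wedge u (apply2 M w)"
  by (cases M; cases u; cases w) (auto simp: algebra_simps)

lemma wedge_scale_left [simp]: "wedge (scale l u) w = l * wedge u w"
  by (cases u; cases w) (auto simp: algebra_simps)

lemma wedge_scale_right [simp]: "wedge u (scale l w) = l * wedge u w"
  by (cases u; cases w) (auto simp: algebra_simps)

lemma wedge_self [simp]: "wedge u u = 0"
  by (cases u) (auto simp: algebra_simps)

lemma wedge_antisym: "wedge u w = - wedge w u"
  by (cases u; cases w) (auto simp: algebra_simps)

lemma wedge_eq_0_iff: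
  assumes "u \<noteq> (0, 0)" "w \<noteq> (0, 0)"
  shows "wedge u w = 0 \<longleftrightarrow> (\<exists>l. w = scale l u)"
proof
  obtain a b c d where u: "u = (a, b)" and w: "w = (c, d)" by (cases u; cases w)
  assume "wedge u w = 0"
  then have e: "a * d = b * c" using u w by simp
  show "\<exists>l. w = scale l u"
  proof (cases "a = 0")
    case True
    then have "b \<noteq> 0" using assms u by auto
    then show ?thesis using True e u w by (intro exI[of _ "d / b"]) auto
  next
    case False
    then show ?thesis using e u w by (intro exI[of _ "c / a"]) (auto simp: field_simps)
  qed
qed auto

lemma apply2_nonzero: "det2 M \<noteq> 0 \<Longrightarrow> u \<noteq> (0, 0) \<Longrightarrow> apply2 M u \<noteq> (0, 0)"
  using apply2_adj2_apply2[of M u] by (cases M; cases u) auto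

lemma hcoord_eq_scaleD:
  assumes "hcoord x = scale l (hcoord y)"
  shows "x = y" "l = 1"
  using assms by (cases x; cases y; auto)+

lemma hcoord_moeb_mat:
  assumes "det2 M \<noteq> 0"
  shows "\<exists>l. l \<noteq> 0 \<and> hcoord (moeb_mat M y) = scale l (apply2 M (hcoord y))"
proof -
  obtain a b c d where M: "M = (a, b, c, d)" by (cases M)
  have det: "a * d - b * c \<noteq> 0" using assms M by simp
  show ?thesis
  proof (cases y)
    case None
    show ?thesis
    proof (cases "c = 0")
      case True
      then have "a \<noteq> 0" using det by auto
      then show ?thesis using None True M by (intro exI[of _ "1 / a"]) (auto simp: moeb_def)
    qed (use None M in \<open>auto simp: moeb_def intro!: exI[of _ "- 1 / c"]\<close>)
  next
    case (Some x)
    show ?thesis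
    proof (cases "c * x + d = 0")
      case True
      then have "d = - c * x" by (simp add: eq_neg_iff_add_eq_0 add.commute)
      then have "a * d - b * c = - c * (a * x + b)" by (simp add: algebra_simps)
      then have "a * x + b \<noteq> 0" using det by auto
      then show ?thesis using Some True M
        by (intro exI[of _ "- 1 / (a * x + b)"]) (auto simp: moeb_def)
    qed (use Some M in \<open>auto simp: moeb_def intro!: exI[of _ "1 / (c * x + d)"]\<close>)
  qed
qed

definition hscale :: "'k::field mat2 \<Rightarrow> 'k option \<Rightarrow> 'k" where
  "hscale M y = (SOME l. l \<noteq> 0 \<and> hcoord (moeb_mat M y) = scale l (apply2 M (hcoord y)))"

lemma hscale:
  assumes "det2 M \<noteq> 0"
  shows "hscale M y \<noteq> 0" "hcoord (moeb_mat M y) = scale (hscale M y) (apply2 M (hcoord y))"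
  using someI_ex[OF hcoord_moeb_mat[OF assms, of y]] unfolding hscale_def by auto

lemma hscale_eigenvector:
  assumes "det2 M \<noteq> 0" "apply2 M (hcoord x) = scale c (hcoord x)"
  shows "hscale M x * c = 1"
  using hscale(2)[OF assms(1), of x] hcoord_eq_scaleD(2) by (simp add: assms(2))

lemma moeb_mat_mult2:
  assumes "det2 M \<noteq> 0" "det2 N \<noteq> 0"
  shows "moeb_mat N \<circ> moeb_mat M = moeb_mat (mult2 N M)"
proof
  fix y
  have NM: "det2 (mult2 N M) \<noteq> 0" using assms by (simp add: det2_mult2)
  have "hcoord (moeb_mat N (moeb_mat M y))
      = scale (hscale N (moeb_mat M y) * hscale M y) (apply2 (mult2 N M) (hcoord y))"
    using hscale[OF assms(2), of "moeb_mat M y"] hscale[OF assms(1), of y]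
    by (simp add: apply2_scale apply2_mult2)
  also have "\<dots> = scale (hscale N (moeb_mat M y) * hscale M y / hscale (mult2 N M) y)
                    (hcoord (moeb_mat (mult2 N M) y))"
    using hscale[OF NM, of y] by simp
  finally show "(moeb_mat N \<circ> moeb_mat M) y = moeb_mat (mult2 N M) y"
    using hcoord_eq_scaleD by auto
qed

lemma moeb_mat_smult2:
  assumes "det2 M \<noteq> 0" "l \<noteq> 0"
  shows "moeb_mat (smult2 l M) = moeb_mat M"
proof
  fix y
  have lM: "det2 (smult2 l M) \<noteq> 0" using assms by (simp add: det2_smult2)
  have "apply2 (smult2 l M) u = scale l (apply2 M u)" for u
    by (cases M; cases u) (auto simp: algebra_simps)
  then have "hcoord (moeb_mat (smult2 l M) y)
      = scale (hscale (smult2 l M) y * l / hscale M y) (hcoord (moeb_mat M y))"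
    using hscale[OF lM, of y] hscale[OF assms(1), of y] by simp
  then show "moeb_mat (smult2 l M) y = moeb_mat M y"
    using hcoord_eq_scaleD by auto
qed

lemma moeb_mat_adj2_comp:
  assumes "det2 M \<noteq> 0"
  shows "moeb_mat (adj2 M) \<circ> moeb_mat M = id" "moeb_mat M \<circ> moeb_mat (adj2 M) = id"
proof -
  have scalar: "moeb (det2 M) 0 0 (det2 M) = id"
    using assms by (auto simp: moeb_def fun_eq_iff split: option.splits)
  show "moeb_mat (adj2 M) \<circ> moeb_mat M = id" "moeb_mat M \<circ> moeb_mat (adj2 M) = id"
    using moeb_mat_mult2[of M "adj2 M"] moeb_mat_mult2[of "adj2 M" M] assms
    by (simp_all add: mult2_adj2_left mult2_adj2_right scalar)
qed

lemma bij_moeb_mat: "det2 M \<noteq> 0 \<Longrightarrow> bij (moeb_mat M)"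
  using moeb_mat_adj2_comp by (metis o_bij)

lemma inv_moeb_mat: "det2 M \<noteq> 0 \<Longrightarrow> inv (moeb_mat M) = moeb_mat (adj2 M)"
  using moeb_mat_adj2_comp by (metis inv_unique_comp)

lemma PGL2_iff: "f \<in> PGL2 \<longleftrightarrow> (\<exists>M. det2 M \<noteq> 0 \<and> f = moeb_mat M)"
  unfolding PGL2_def by force

section \<open>The chordal metric\<close>

lemma pluecker:
  "wedge x z * fst y = wedge x y * fst z + wedge y z * fst x"
  "wedge x z * snd y = wedge x y * snd z + wedge y z * snd x"
  by (cases x; cases y; cases z; simp add: algebra_simps)+

context nonarch_valuation
begin

fun vnorm :: "'k \<times> 'k \<Rightarrow> real" where
  "vnorm (x, y) = max (v x) (v y)"

fun mnorm :: "'k mat2 \<Rightarrow> real" where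
  "mnorm (a, b, c, d) = max (max (v a) (v b)) (max (v c) (v d))"

lemma vnorm_nonneg [simp]: "0 \<le> vnorm u"
  by (cases u) (auto simp: le_max_iff_disj)

lemma vnorm_scale [simp]: "vnorm (scale l u) = v l * vnorm u"
  by (cases u) (auto simp: v_mult max_mult_distrib_left)

lemma vnorm_pos: "u \<noteq> (0, 0) \<Longrightarrow> 0 < vnorm u"
  by (cases u) (auto simp: less_max_iff_disj)

lemma vnorm_hcoord_ge_1: "1 \<le> vnorm (hcoord y)"
  by (cases y) auto

lemma vnorm_hcoord_pos: "0 < vnorm (hcoord y)"
  using vnorm_hcoord_ge_1[of y] by linarith

lemma mnorm_nonneg [simp]: "0 \<le> mnorm M"
  by (cases M) (auto simp: le_max_iff_disj)

lemma mnorm_adj2 [simp]: "mnorm (adj2 M) = mnorm M"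
  by (cases M) (auto simp: max.commute max.left_commute)

lemma mnorm_smult2: "mnorm (smult2 l M) = v l * mnorm M"
  by (cases M) (auto simp: v_mult max_mult_distrib_left)

lemma v_wedge_le: "v (wedge u w) \<le> vnorm u * vnorm w"
proof -
  obtain a b c d where u: "u = (a, b)" and w: "w = (c, d)" by (cases u; cases w)
  have "v (a * d) \<le> vnorm u * vnorm w" "v (b * c) \<le> vnorm u * vnorm w"
    using u w by (auto simp: v_mult le_max_iff_disj intro!: mult_mono)
  then show ?thesis using u w by (auto intro: v_diff_le)
qed

lemma vnorm_apply2_le: "vnorm (apply2 M u) \<le> mnorm M * vnorm u"
proof -
  obtain a b c d x y where M: "M = (a, b, c, d)" and u: "u = (x, y)" by (cases M; cases u)
  have "v (a*x) \<le> mnorm M * vnorm u" "v (b*y) \<le> mnorm M * vnorm u"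
       "v (c*x) \<le> mnorm M * vnorm u" "v (d*y) \<le> mnorm M * vnorm u"
    using M u by (auto simp: v_mult le_max_iff_disj intro!: mult_mono)
  then show ?thesis using M u by (auto intro: v_add_le)
qed

lemma vnorm_apply2_ge: "v (det2 M) * vnorm u \<le> mnorm M * vnorm (apply2 M u)"
  using vnorm_apply2_le[of "adj2 M" "apply2 M u"] by (simp add: apply2_adj2_apply2)

lemma chord_hcoord:
  "chord v p q = v (wedge (hcoord p) (hcoord q)) / (vnorm (hcoord p) * vnorm (hcoord q))"
  by (cases p; cases q) (auto simp: chord_def max.commute v_diff_commute)

lemma chord_eq_scaled:
  assumes "hcoord p = scale l P" "hcoord q = scale m Q"
  shows "chord v p q = v (wedge P Q) / (vnorm P * vnorm Q)"
proof -
  have "l \<noteq> 0" "m \<noteq> 0" using assms hcoord_nonzero[of p] hcoord_nonzero[of q]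
    by (cases P; cases Q; auto)+
  then show ?thesis unfolding chord_hcoord assms by (simp add: v_mult)
qed

lemma chord_nonneg [simp]: "0 \<le> chord v p q"
  unfolding chord_hcoord by simp

lemma chord_self [simp]: "chord v p p = 0"
  unfolding chord_hcoord by simp

lemma chord_sym: "chord v p q = chord v q p"
  unfolding chord_hcoord by (metis mult.commute v_uminus wedge_antisym)

lemma chord_eq_0_iff: "chord v p q = 0 \<longleftrightarrow> p = q"
proof
  assume "chord v p q = 0"
  then have "wedge (hcoord p) (hcoord q) = 0"
    unfolding chord_hcoord using vnorm_hcoord_pos[of p] vnorm_hcoord_pos[of q] by simp
  then obtain l where "hcoord q = scale l (hcoord p)" using wedge_eq_0_iff hcoord_nonzero by blast
  then show "p = q" using hcoord_eq_scaleD by metis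
qed (simp add: chord_hcoord)

lemma chord_pos: "p \<noteq> q \<Longrightarrow> 0 < chord v p q"
  using chord_eq_0_iff[of p q] chord_nonneg[of p q] by linarith

lemma chord_ultra: "chord v x z \<le> max (chord v x y) (chord v y z)"
proof -
  let ?X = "hcoord x" and ?Y = "hcoord y" and ?Z = "hcoord z"
  define A where "A = v (wedge ?X ?Y) * vnorm ?Z"
  define B where "B = v (wedge ?Y ?Z) * vnorm ?X"
  have "v (wedge ?X ?Z * c ?Y) \<le> max A B" if "c = fst \<or> c = snd" for c
  proof -
    have "v (wedge ?X ?Y * c ?Z) \<le> A" "v (wedge ?Y ?Z * c ?X) \<le> B"
      unfolding A_def B_def using that
      by (cases ?X; cases ?Z; auto simp: v_mult intro!: mult_left_mono)+
    then show ?thesis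
      using that pluecker[of ?X ?Z ?Y] by (auto intro!: v_add_le simp: le_max_iff_disj)
  qed
  from this[of fst] this[of snd] have key: "v (wedge ?X ?Z) * vnorm ?Y \<le> max A B"
    by (cases ?Y) (simp add: v_mult max_mult_distrib_left)
  have pos: "0 < vnorm ?X" "0 < vnorm ?Y" "0 < vnorm ?Z" using vnorm_hcoord_pos by auto
  have "chord v x z = v (wedge ?X ?Z) * vnorm ?Y / (vnorm ?X * vnorm ?Y * vnorm ?Z)"
    unfolding chord_hcoord using pos by (simp add: field_simps)
  also have "\<dots> \<le> max A B / (vnorm ?X * vnorm ?Y * vnorm ?Z)"
    using key pos by (intro divide_right_mono) auto
  also have "\<dots> = max (chord v x y) (chord v y z)"
    unfolding chord_hcoord A_def B_def using pos by (simp add: max_divide_distrib_right field_simps)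
  finally show ?thesis .
qed

lemma chord_moeb_mat:
  assumes "det2 M \<noteq> 0"
  shows "chord v (moeb_mat M x) (moeb_mat M y) = v (det2 M) * v (wedge (hcoord x) (hcoord y))
           / (vnorm (apply2 M (hcoord x)) * vnorm (apply2 M (hcoord y)))"
  using chord_eq_scaled[OF hscale(2)[OF assms, of x] hscale(2)[OF assms, of y]]
  by (simp add: wedge_apply2 v_mult)

lemma chord_moeb_mat_le:
  assumes "det2 M \<noteq> 0"
  shows "chord v (moeb_mat M x) (moeb_mat M y) \<le> mnorm M ^ 2 * chord v x y / v (det2 M)"
proof -
  let ?X = "hcoord x" and ?Y = "hcoord y"
  have d: "0 < v (det2 M)" using assms by simp
  have MX: "0 < vnorm (apply2 M ?X)" and MY: "0 < vnorm (apply2 M ?Y)"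
    using apply2_nonzero[OF assms hcoord_nonzero] vnorm_pos by blast+
  have m: "0 < mnorm M"
    using vnorm_apply2_le[of M ?X] MX vnorm_hcoord_pos[of x] mnorm_nonneg[of M]
    by (metis linorder_not_le mult_eq_0_iff order_antisym_conv)
  have lower: "v (det2 M) * vnorm (hcoord u) / mnorm M \<le> vnorm (apply2 M (hcoord u))" for u
    using vnorm_apply2_ge[of M "hcoord u"] m by (simp add: field_simps)
  have "chord v (moeb_mat M x) (moeb_mat M y) \<le> v (det2 M) * v (wedge ?X ?Y)
          / ((v (det2 M) * vnorm ?X / mnorm M) * (v (det2 M) * vnorm ?Y / mnorm M))"
    unfolding chord_moeb_mat[OF assms] using d m vnorm_hcoord_pos MX MY
    by (intro divide_left_mono mult_mono lower mult_pos_pos) auto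
  also have "\<dots> = mnorm M ^ 2 * chord v x y / v (det2 M)"
    unfolding chord_hcoord using d m vnorm_hcoord_pos[of x] vnorm_hcoord_pos[of y]
    by (simp add: field_simps power2_eq_square)
  finally show ?thesis .
qed

lemma normalized_mat_exists:
  assumes "det2 M \<noteq> 0"
  shows "\<exists>M'. det2 M' \<noteq> 0 \<and> moeb_mat M' = moeb_mat M \<and> mnorm M' = 1"
proof -
  obtain a b c d where M: "M = (a, b, c, d)" by (cases M)
  have "mnorm M \<in> v ` {a, b, c, d}"
    using M by (simp add: max_def)
  then obtain e where e: "v e = mnorm M" by (metis imageE)
  have "0 < mnorm M"
    using assms M by (auto simp: less_max_iff_disj)
  then have "e \<noteq> 0" using e by auto
  then show ?thesis using assms e \<open>0 < mnorm M\<close>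
    by (intro exI[of _ "smult2 (inverse e) M"])
       (simp add: det2_smult2 moeb_mat_smult2 mnorm_smult2 v_inverse)
qed

end

lemma bij_inv_apply [simp]: "bij f \<Longrightarrow> inv f (f x) = x"
  by (simp add: bij_is_inj)

lemma bij_apply_inv [simp]: "bij f \<Longrightarrow> f (inv f x) = x"
  by (simp add: bij_is_surj surj_f_inv_f)

lemma bij_comp_inv [simp]: "bij f \<Longrightarrow> f \<circ> inv f = id"
  by (simp add: fun_eq_iff)

lemma bij_inv_comp [simp]: "bij f \<Longrightarrow> inv f \<circ> f = id"
  by (simp add: fun_eq_iff)

lemma bij_funpow_diff_id:
  assumes "bij f" "m \<le> n" "f ^^ m = f ^^ n"
  shows "f ^^ (n - m) = id"
proof
  fix x
  have "f ^^ (n - m) \<circ> f ^^ m = f ^^ m"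
    using assms(2,3) by (metis funpow_add le_add_diff_inverse2)
  then have "(f ^^ (n - m)) ((f ^^ m) (inv (f ^^ m) x)) = (f ^^ m) (inv (f ^^ m) x)"
    by (metis comp_apply)
  then show "(f ^^ (n - m)) x = id x"
    using bij_fn[OF assms(1), of m] by simp
qed

lemma mgen_gen: "f \<in> S \<Longrightarrow> f \<in> mgen S"
  using mgen.gen_mul[of f S id] mgen.gen_id[of S] by (simp only: comp_id)

lemma mgen_comp:
  assumes "f \<in> mgen S" "g \<in> mgen S"
  shows "f \<circ> g \<in> mgen S"
  using assms(1)
proof (induction f rule: mgen.induct)
  case gen_id
  then show ?case using assms(2) by (simp only: id_comp)
next
  case (gen_mul f h)
  then show ?case by (metis comp_assoc mgen.gen_mul)
next
  case (gen_inv f h)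
  then show ?case by (metis comp_assoc mgen.gen_inv)
qed

lemma bij_mgen:
  assumes "\<And>s. s \<in> S \<Longrightarrow> bij s" "f \<in> mgen S"
  shows "bij f"
  using assms(2)
proof (induction f rule: mgen.induct)
  case gen_id
  then show ?case by (simp add: id_def[symmetric])
next
  case (gen_mul f h)
  then show ?case using assms(1) by (intro bij_comp) auto
next
  case (gen_inv f h)
  then show ?case using assms(1) by (intro bij_comp bij_imp_bij_inv) auto
qed

lemma mgen_inv:
  assumes "\<And>s. s \<in> S \<Longrightarrow> bij s" "f \<in> mgen S"
  shows "inv f \<in> mgen S"
  using assms(2)
proof (induction f rule: mgen.induct)
  case gen_id
  then show ?case using mgen.gen_id[of S] by (simp add: id_def)
next
  case (gen_mul f h)
  have "inv (f \<circ> h) = inv h \<circ> inv f"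
    using assms gen_mul bij_mgen[OF assms(1)] by (simp add: o_inv_distrib)
  moreover have "inv f \<in> mgen S"
    using gen_mul mgen.gen_inv[of f S id] mgen.gen_id[of S] by (simp only: comp_id)
  ultimately show ?case using gen_mul mgen_comp by metis
next
  case (gen_inv f h)
  have "bij f" using assms gen_inv by blast
  then have "inv (inv f \<circ> h) = inv h \<circ> f"
    using gen_inv assms bij_mgen[OF assms(1)]
    by (simp add: o_inv_distrib bij_imp_bij_inv inv_inv_eq)
  then show ?case using gen_inv mgen_comp mgen_gen by metis
qed

section \<open>Limits of products along finite subsets\<close>

context nonarch_valuation
begin

text \<open>The unconditional convergence of \<^const>\<open>theta_has\<close>, for an arbitrary index set.\<close>

definition finset_lim :: "'a set \<Rightarrow> ('a set \<Rightarrow> 'k) \<Rightarrow> 'k \<Rightarrow> bool" where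
  "finset_lim S f L \<longleftrightarrow> (\<forall>e>0. \<exists>F0. finite F0 \<and> F0 \<subseteq> S \<and>
        (\<forall>F. finite F \<and> F0 \<subseteq> F \<and> F \<subseteq> S \<longrightarrow> v (f F - L) < e))"

lemma finset_limD:
  "finset_lim S f L \<Longrightarrow> e > 0 \<Longrightarrow>
     \<exists>F0. finite F0 \<and> F0 \<subseteq> S \<and> (\<forall>F. finite F \<and> F0 \<subseteq> F \<and> F \<subseteq> S \<longrightarrow> v (f F - L) < e)"
  unfolding finset_lim_def by blast

lemma finset_lim_cong:
  assumes "\<And>F. finite F \<Longrightarrow> F \<subseteq> S \<Longrightarrow> f F = g F"
  shows "finset_lim S f L = finset_lim S g L"
  unfolding finset_lim_def using assms by (metis (no_types, lifting))

lemma finset_lim_unique: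
  assumes "finset_lim S f L" "finset_lim S f L'"
  shows "L = L'"
proof (rule ccontr)
  assume "L \<noteq> L'"
  then have e: "0 < v (L - L')" by simp
  obtain F1 where F1: "finite F1" "F1 \<subseteq> S"
      "\<forall>F. finite F \<and> F1 \<subseteq> F \<and> F \<subseteq> S \<longrightarrow> v (f F - L) < v (L - L')"
    using finset_limD[OF assms(1) e] by blast
  obtain F2 where F2: "finite F2" "F2 \<subseteq> S"
      "\<forall>F. finite F \<and> F2 \<subseteq> F \<and> F \<subseteq> S \<longrightarrow> v (f F - L') < v (L - L')"
    using finset_limD[OF assms(2) e] by blast
  have "v (f (F1 \<union> F2) - L) < v (L - L')" "v (f (F1 \<union> F2) - L') < v (L - L')"
    using F1 F2 by auto
  moreover have "v (L - L') \<le> max (v (L - f (F1 \<union> F2))) (v (f (F1 \<union> F2) - L'))"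
    by (rule v_diff_triangle)
  ultimately show False by (simp add: v_diff_commute)
qed

lemma finset_lim_mult:
  assumes "finset_lim S f L" "finset_lim S g M"
  shows "finset_lim S (\<lambda>F. f F * g F) (L * M)"
  unfolding finset_lim_def
proof (intro allI impI)
  fix e :: real
  assume e: "0 < e"
  define B where "B = max (v L) (v M) + 1"
  have B: "0 < B" "1 \<le> B" "v L \<le> B" "v M \<le> B"
    unfolding B_def by (auto simp: max_def intro: add_nonneg_pos)
  define d where "d = min 1 (e / (2 * B))"
  have d: "0 < d" "d \<le> 1" "B * d < e"
  proof -
    show "0 < d" "d \<le> 1" unfolding d_def using e B by auto
    have "B * d \<le> B * (e / (2 * B))" unfolding d_def using B by (intro mult_left_mono) auto
    also have "\<dots> = e / 2" using B by simp
    finally show "B * d < e" using e by simp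
  qed
  obtain F1 where F1: "finite F1" "F1 \<subseteq> S" "\<forall>F. finite F \<and> F1 \<subseteq> F \<and> F \<subseteq> S \<longrightarrow> v (f F - L) < d"
    using finset_limD[OF assms(1) d(1)] by blast
  obtain F2 where F2: "finite F2" "F2 \<subseteq> S" "\<forall>F. finite F \<and> F2 \<subseteq> F \<and> F \<subseteq> S \<longrightarrow> v (g F - M) < d"
    using finset_limD[OF assms(2) d(1)] by blast
  show "\<exists>F0. finite F0 \<and> F0 \<subseteq> S \<and>
      (\<forall>F. finite F \<and> F0 \<subseteq> F \<and> F \<subseteq> S \<longrightarrow> v (f F * g F - L * M) < e)"
  proof (intro exI[of _ "F1 \<union> F2"] conjI allI impI)
    show "finite (F1 \<union> F2)" "F1 \<union> F2 \<subseteq> S" using F1 F2 by auto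
    fix F
    assume "finite F \<and> F1 \<union> F2 \<subseteq> F \<and> F \<subseteq> S"
    then have close: "v (f F - L) < d" "v (g F - M) < d" using F1 F2 by auto
    have "v (f F) \<le> max (v (f F - L)) (v L)" using v_add[of "f F - L" L] by simp
    then have vf: "v (f F) \<le> B" using close(1) d(2) B by linarith
    have "f F * g F - L * M = f F * (g F - M) + (f F - L) * M" by (simp add: algebra_simps)
    then have "v (f F * g F - L * M) \<le> max (v (f F) * v (g F - M)) (v (f F - L) * v M)"
      using v_add[of "f F * (g F - M)" "(f F - L) * M"] by (simp add: v_mult)
    also have "\<dots> \<le> B * d"
    proof -
      have "v (f F) * v (g F - M) \<le> B * d" using vf close(2) B by (intro mult_mono) auto
      moreover have "v (f F - L) * v M \<le> d * B" using close(1) B d(1) by (intro mult_mono) auto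
      ultimately show ?thesis by (simp add: mult.commute)
    qed
    finally show "v (f F * g F - L * M) < e" using d(3) by simp
  qed
qed

lemma finset_lim_reindex:
  assumes "bij_betw \<phi> S' S" "finset_lim S f L"
  shows "finset_lim S' (\<lambda>F. f (\<phi> ` F)) L"
  unfolding finset_lim_def
proof (intro allI impI)
  fix e :: real
  assume e: "0 < e"
  obtain F0 where F0: "finite F0" "F0 \<subseteq> S" "\<forall>F. finite F \<and> F0 \<subseteq> F \<and> F \<subseteq> S \<longrightarrow> v (f F - L) < e"
    using finset_limD[OF assms(2) e] by blast
  have surj: "\<phi> ` S' = S" using assms(1) by (rule bij_betw_imp_surj_on)
  let ?G = "inv_into S' \<phi> ` F0"
  have G: "finite ?G" "?G \<subseteq> S'"
  proof -
    show "finite ?G" using F0(1) by (rule finite_imageI)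
    show "?G \<subseteq> S'"
    proof
      fix y
      assume "y \<in> ?G"
      then obtain x where x: "x \<in> F0" "y = inv_into S' \<phi> x" by blast
      then have "x \<in> \<phi> ` S'" using F0(2) surj by blast
      then show "y \<in> S'" unfolding x(2) by (rule inv_into_into)
    qed
  qed
  have img: "\<phi> ` ?G = F0"
  proof -
    have "\<phi> ` ?G = (\<lambda>x. \<phi> (inv_into S' \<phi> x)) ` F0" by (simp only: image_image)
    also have "\<dots> = (\<lambda>x. x) ` F0"
    proof (rule image_cong)
      fix x
      assume "x \<in> F0"
      then have "x \<in> \<phi> ` S'" using F0(2) surj by blast
      then show "\<phi> (inv_into S' \<phi> x) = x" by (rule f_inv_into_f)
    qed simp
    finally show ?thesis by simp
  qed
  show "\<exists>F0. finite F0 \<and> F0 \<subseteq> S' \<and>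
      (\<forall>F. finite F \<and> F0 \<subseteq> F \<and> F \<subseteq> S' \<longrightarrow> v (f (\<phi> ` F) - L) < e)"
  proof (intro exI[of _ ?G] conjI allI impI)
    fix F
    assume F: "finite F \<and> ?G \<subseteq> F \<and> F \<subseteq> S'"
    have "F0 \<subseteq> \<phi> ` F" using F image_mono img by metis
    moreover have "\<phi> ` F \<subseteq> S" using F image_mono surj by metis
    moreover have "finite (\<phi> ` F)" using F by simp
    ultimately show "v (f (\<phi> ` F) - L) < e" using F0(3) by blast
  qed (fact G(1), fact G(2))
qed

lemma finset_lim_insert:
  assumes "finset_lim (S - {x}) f L" "x \<in> S"
    and "\<And>F. finite F \<Longrightarrow> x \<in> F \<Longrightarrow> F \<subseteq> S \<Longrightarrow> g F = c * f (F - {x})"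
  shows "finset_lim S g (c * L)"
  unfolding finset_lim_def
proof (intro allI impI)
  fix e :: real
  assume e: "0 < e"
  have c: "0 < v c + 1" by (simp add: add_nonneg_pos)
  then have d: "0 < e / (v c + 1)" using e by simp
  obtain F0 where F0: "finite F0" "F0 \<subseteq> S - {x}"
      "\<forall>F. finite F \<and> F0 \<subseteq> F \<and> F \<subseteq> S - {x} \<longrightarrow> v (f F - L) < e / (v c + 1)"
    using finset_limD[OF assms(1) d] by blast
  show "\<exists>F0. finite F0 \<and> F0 \<subseteq> S \<and> (\<forall>F. finite F \<and> F0 \<subseteq> F \<and> F \<subseteq> S \<longrightarrow> v (g F - c * L) < e)"
  proof (intro exI[of _ "insert x F0"] conjI allI impI)
    show "finite (insert x F0)" "insert x F0 \<subseteq> S" using F0(1,2) assms(2) by auto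
    fix F
    assume F: "finite F \<and> insert x F0 \<subseteq> F \<and> F \<subseteq> S"
    then have "finite (F - {x}) \<and> F0 \<subseteq> F - {x} \<and> F - {x} \<subseteq> S - {x}" using F0(2) by blast
    then have close: "v (f (F - {x}) - L) < e / (v c + 1)" using F0(3) by blast
    have "g F - c * L = c * (f (F - {x}) - L)" using assms(3)[of F] F by (simp add: algebra_simps)
    then have "v (g F - c * L) = v c * v (f (F - {x}) - L)" by (simp add: v_mult)
    also have "\<dots> \<le> v c * (e / (v c + 1))" using close by (intro mult_left_mono) auto
    also have "\<dots> < e" using e c by (simp add: divide_less_eq)
    finally show "v (g F - c * L) < e" .
  qed
qed

lemma v_prod_diff_one_less:
  assumes "finite F" "\<forall>x\<in>F. v (t x - 1) < \<epsilon>" "0 < \<epsilon>" "\<epsilon> \<le> 1"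
  shows "v (prod t F - 1) < \<epsilon>"
  using assms
proof (induction F rule: finite_induct)
  case empty
  then show ?case by simp
next
  case (insert x F)
  then have IH: "v (prod t F - 1) < \<epsilon>" by simp
  have "v (prod t F) \<le> max (v (prod t F - 1)) (v 1)" using v_add[of "prod t F - 1" 1] by simp
  then have "v (prod t F) \<le> 1" using IH insert.prems by (auto simp: max_def)
  then have "v ((t x - 1) * prod t F) \<le> v (t x - 1)"
    by (simp add: v_mult mult_left_le)
  then have "v ((t x - 1) * prod t F) < \<epsilon>"
    using insert.prems by simp
  moreover have "prod t (insert x F) - 1 = (t x - 1) * prod t F + (prod t F - 1)"
    using insert by (simp add: algebra_simps)
  ultimately show ?case
    using IH v_add_less[of "(t x - 1) * prod t F" \<epsilon> "prod t F - 1"] by (simp add: algebra_simps)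
qed

lemma eventually_divide_nat_less:
  fixes c e :: real
  assumes "0 < e"
  shows "\<exists>N. \<forall>n\<ge>N. c / (real n + 2) < e"
proof -
  obtain N :: nat where N: "c / e < real N" using reals_Archimedean2 by blast
  have "c / (real n + 2) < e" if "N \<le> n" for n
  proof -
    have "c / e < real n + 2" using N that by (smt (verit) of_nat_mono)
    then show ?thesis using assms by (simp add: field_simps)
  qed
  then show ?thesis by blast
qed

lemma finset_lim_exhaustion:
  assumes complete: "complete_wrt v"
    and H: "\<And>n. finite (H n)" "\<And>n. H n \<subseteq> S" "\<And>m n. m \<le> n \<Longrightarrow> H m \<subseteq> H n"
    and near: "\<And>n F. finite F \<Longrightarrow> H n \<subseteq> F \<Longrightarrow> F \<subseteq> S \<Longrightarrow> v (f F - f (H n)) \<le> c / (real n + 2)"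
  shows "\<exists>L. finset_lim S f L \<and> (0 < c \<longrightarrow> v (f (H 0) - L) < c)"
proof -
  note small = eventually_divide_nat_less[of _ c]
  have "\<exists>N. \<forall>m\<ge>N. \<forall>n\<ge>N. v (f (H m) - f (H n)) < e" if "0 < e" for e
  proof -
    obtain N where N: "c / (real N + 2) < e" using small[OF \<open>0 < e\<close>] by blast
    have close: "v (f (H m) - f (H N)) < e" if "N \<le> m" for m
      using near[OF H(1) H(3)[OF that] H(2)] N by simp
    have "v (f (H m) - f (H n)) < e" if "N \<le> m" "N \<le> n" for m n
      using close[OF that(1)] close[OF that(2)] v_diff_triangle[of "f (H m)" "f (H n)" "f (H N)"]
        v_diff_commute[of "f (H N)" "f (H n)"] by simp
    then show ?thesis by blast
  qed
  then obtain L where L: "\<forall>e>0. \<exists>N. \<forall>n\<ge>N. v (f (H n) - L) < e"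
    using complete[unfolded complete_wrt_def, rule_format, of "\<lambda>n. f (H n)"] by auto
  have "finset_lim S f L"
    unfolding finset_lim_def
  proof (intro allI impI)
    fix e :: real
    assume "0 < e"
    obtain N1 where N1: "\<forall>n\<ge>N1. c / (real n + 2) < e"
      using small[OF \<open>0 < e\<close>] by blast
    obtain N2 where N2: "\<forall>n\<ge>N2. v (f (H n) - L) < e"
      using L \<open>0 < e\<close> by blast
    define n where "n = max N1 N2"
    have "v (f F - L) < e" if "finite F" "H n \<subseteq> F" "F \<subseteq> S" for F
    proof -
      have "c / (real n + 2) < e" "v (f (H n) - L) < e" using N1 N2 unfolding n_def by auto
      then show ?thesis using near[OF that] v_diff_triangle[of "f F" L "f (H n)"] by simp
    qed
    then show "\<exists>F0. finite F0 \<and> F0 \<subseteq> S \<and> (\<forall>F. finite F \<and> F0 \<subseteq> F \<and> F \<subseteq> S \<longrightarrow> v (f F - L) < e)"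
      using H(1,2)[of n] by (intro exI[of _ "H n"]) simp
  qed
  moreover have "v (f (H 0) - L) < c" if c: "0 < c"
  proof -
    obtain n where n: "v (f (H n) - L) < c" using L c by blast
    have "v (f (H n) - f (H 0)) < c"
      using near[OF H(1) H(3) H(2), of 0 n] c by simp
    then show ?thesis
      using n v_diff_triangle[of "f (H 0)" L "f (H n)"] by (simp add: v_diff_commute)
  qed
  ultimately show ?thesis by blast
qed

lemma finset_lim_prod_exists:
  assumes complete: "complete_wrt v"
    and fin: "\<And>e. e > 0 \<Longrightarrow> finite {x\<in>S. e \<le> v (t x - 1)}"
  shows "\<exists>L. finset_lim S (prod t) L \<and> ((\<forall>x\<in>S. t x \<noteq> 0) \<longrightarrow> L \<noteq> 0)"
proof -
  define H where "H n = {x\<in>S. 1 / (real n + 2) \<le> v (t x - 1)}" for n :: nat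
  have H: "finite (H n)" "H n \<subseteq> S" for n
    unfolding H_def by (auto intro: fin)
  have mono: "H m \<subseteq> H n" if "m \<le> n" for m n
  proof -
    have "1 / (real n + 2) \<le> 1 / (real m + 2)"
      using that by (intro divide_left_mono) auto
    then show ?thesis unfolding H_def by auto
  qed
  have close: "v (prod t (F - H n) - 1) < 1 / (real n + 2)" if "finite F" "F \<subseteq> S" for F n
    using that by (intro v_prod_diff_one_less) (auto simp: H_def not_le)
  have split: "prod t F = prod t (H n) * prod t (F - H n)" if "finite F" "H n \<subseteq> F" for F n
    using prod.subset_diff[OF that(2,1)] by (simp add: mult.commute)
  define c where "c = v (prod t (H 0))"
  have vH: "v (prod t (H n)) = c" for n
  proof -
    have "v (prod t (H n - H 0) - 1) < 1"
      using close[OF H(1,2), of n 0] by simp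
    then show ?thesis
      using split[OF H(1) mono[of 0 n]] unfolding c_def
      by (simp add: v_mult v_eq_one_if_close_one)
  qed
  have near: "v (prod t F - prod t (H n)) \<le> c / (real n + 2)"
    if "finite F" "H n \<subseteq> F" "F \<subseteq> S" for n F
  proof -
    have "prod t F - prod t (H n) = prod t (H n) * (prod t (F - H n) - 1)"
      using split[OF that(1,2)] by (simp add: right_diff_distrib)
    then have "v (prod t F - prod t (H n)) = c * v (prod t (F - H n) - 1)"
      by (simp add: v_mult vH)
    also have "\<dots> \<le> c * (1 / (real n + 2))"
      using close[OF that(1,3), of n] unfolding c_def by (intro mult_left_mono) auto
    finally show ?thesis by simp
  qed
  obtain L where L: "finset_lim S (prod t) L" "0 < c \<Longrightarrow> v (prod t (H 0) - L) < c"
    using finset_lim_exhaustion[OF complete H mono near] by blast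
  have "L \<noteq> 0" if "\<forall>x\<in>S. t x \<noteq> 0"
  proof -
    have "prod t (H 0) \<noteq> 0" using that H(1,2)[of 0] by (auto simp: prod_zero_iff)
    then have "0 < c" unfolding c_def by simp
    then have "v L = c"
      using L(2) v_eq_if_close[of L "prod t (H 0)"] by (simp add: v_diff_commute c_def)
    then show ?thesis using \<open>0 < c\<close> by auto
  qed
  then show ?thesis using L(1) by blast
qed

end

text \<open>The hypotheses of the theorem that the argument needs; of the free basis of \<open>\<Gamma>\<close> only the
  elements \<open>xi \<sigma> l 1 = \<sigma> l \<circ> inv (\<sigma> 0)\<close> are needed.\<close>

locale cyclic_schottky = nonarch_valuation v
  for v :: "'k::field_char_0 \<Rightarrow> real" +
  fixes p :: nat and \<zeta> :: 'k
    and \<Gamma> :: "('k option \<Rightarrow> 'k option) set" and g s :: nat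
    and \<sigma> \<upsilon> :: "nat \<Rightarrow> 'k option \<Rightarrow> 'k option" and \<nu> :: "nat \<Rightarrow> int"
  assumes complete: "complete_wrt v"
    and p_ge_2: "2 \<le> p"
    and zeta_nonzero: "\<zeta> \<noteq> 0"
    and schottky: "schottky v \<Gamma> g"
    and inf_ordinary: "None \<in> ordinary v \<Gamma>"
    and sigma0_normalizes: "\<sigma> 0 \<in> normalizer \<Gamma>"
    and sigma_coset: "\<And>l. 0 < l \<Longrightarrow> l \<le> s \<Longrightarrow> \<sigma> l \<circ> inv (\<sigma> 0) \<in> \<Gamma>"
    and sigma_pow_p: "\<And>l. l \<le> s \<Longrightarrow> \<sigma> l ^^ p = id"
    and free_prod: "free_product_cyclic p (mgen (\<Gamma> \<union> {\<sigma> 0})) \<sigma> s"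
    and sigma_diag: "\<And>l. l \<le> s \<Longrightarrow> \<upsilon> l \<in> PGL2 \<and> \<sigma> l = inv (\<upsilon> l) \<circ> moeb (\<zeta> powi \<nu> l) 0 0 1 \<circ> \<upsilon> l"
    and fixed_points_ordinary:
      "\<And>l. l \<le> s \<Longrightarrow> inv (\<upsilon> l) (Some 0) \<in> ordinary v \<Gamma> \<and> inv (\<upsilon> l) None \<in> ordinary v \<Gamma>"
begin

abbreviation "\<Omega> \<equiv> ordinary v \<Gamma>"

lemma Gamma_moeb_mat: "\<gamma> \<in> \<Gamma> \<Longrightarrow> \<exists>M. det2 M \<noteq> 0 \<and> \<gamma> = moeb_mat M"
  using schottky PGL2_iff unfolding schottky_def by blast

lemma bij_Gamma: "\<gamma> \<in> \<Gamma> \<Longrightarrow> bij \<gamma>"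
  using Gamma_moeb_mat bij_moeb_mat by blast

lemma Gamma_mgen: "\<exists>S. \<Gamma> = mgen S \<and> (\<forall>s\<in>S. bij s)"
proof -
  obtain S where S: "\<Gamma> = mgen S" using schottky unfolding schottky_def by blast
  then have "S \<subseteq> \<Gamma>" using mgen_gen by blast
  then show ?thesis using S bij_Gamma by blast
qed

lemma Gamma_id [simp]: "id \<in> \<Gamma>"
  using Gamma_mgen mgen.gen_id by metis

lemma Gamma_comp: "f \<in> \<Gamma> \<Longrightarrow> h \<in> \<Gamma> \<Longrightarrow> f \<circ> h \<in> \<Gamma>"
  using Gamma_mgen mgen_comp by metis

lemma Gamma_inv: "f \<in> \<Gamma> \<Longrightarrow> inv f \<in> \<Gamma>"
  using Gamma_mgen mgen_inv by metis

lemma Gamma_funpow: "f \<in> \<Gamma> \<Longrightarrow> f ^^ n \<in> \<Gamma>"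
  by (induction n) (auto intro: Gamma_comp)

lemma Gamma_torsion_free: "f \<in> \<Gamma> \<Longrightarrow> 0 < n \<Longrightarrow> f ^^ n = id \<Longrightarrow> f = id"
  using schottky unfolding schottky_def by blast

lemma Gamma_funpow_eq_imp_id:
  assumes "f \<in> \<Gamma>" "m < n" "f ^^ m = f ^^ n"
  shows "f = id"
proof -
  have "f ^^ (n - m) = id"
    using bij_funpow_diff_id[OF bij_Gamma[OF assms(1)]] assms(2,3) by simp
  then show ?thesis using Gamma_torsion_free[OF assms(1), of "n - m"] assms(2) by simp
qed

lemma bij_betw_Gamma_comp_left:
  assumes "\<gamma> \<in> \<Gamma>"
  shows "bij_betw ((\<circ>) \<gamma>) \<Gamma> \<Gamma>"
proof (rule bij_betw_byWitness[where f' = "(\<circ>) (inv \<gamma>)"])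
  have "bij \<gamma>" using bij_Gamma assms by blast
  then show "\<forall>\<delta>\<in>\<Gamma>. inv \<gamma> \<circ> (\<gamma> \<circ> \<delta>) = \<delta>" "\<forall>\<delta>\<in>\<Gamma>. \<gamma> \<circ> (inv \<gamma> \<circ> \<delta>) = \<delta>"
    by (simp_all add: comp_assoc[symmetric])
  show "(\<circ>) \<gamma> ` \<Gamma> \<subseteq> \<Gamma>" "(\<circ>) (inv \<gamma>) ` \<Gamma> \<subseteq> \<Gamma>"
    using assms Gamma_comp Gamma_inv by auto
qed

definition ups_mat :: "nat \<Rightarrow> 'k mat2" where
  "ups_mat l = (SOME A. det2 A \<noteq> 0 \<and> \<upsilon> l = moeb_mat A)"

definition diag_mat :: "nat \<Rightarrow> 'k mat2" where
  "diag_mat l = (\<zeta> powi \<nu> l, 0, 0, 1)"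

definition sigma_mat :: "nat \<Rightarrow> 'k mat2" where
  "sigma_mat l = mult2 (adj2 (ups_mat l)) (mult2 (diag_mat l) (ups_mat l))"

definition ofix :: "nat \<Rightarrow> 'k option" where
  "ofix l = inv (\<upsilon> l) (Some 0)"

definition efix :: "nat \<Rightarrow> 'k option" where
  "efix l = inv (\<upsilon> l) None"

lemma ups_mat: "l \<le> s \<Longrightarrow> det2 (ups_mat l) \<noteq> 0 \<and> \<upsilon> l = moeb_mat (ups_mat l)"
  unfolding ups_mat_def by (rule someI_ex) (use sigma_diag PGL2_iff in blast)

lemma det2_diag_mat: "det2 (diag_mat l) \<noteq> 0"
  unfolding diag_mat_def using zeta_nonzero by simp

lemma det2_sigma_mat: "l \<le> s \<Longrightarrow> det2 (sigma_mat l) \<noteq> 0"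
  unfolding sigma_mat_def using ups_mat det2_diag_mat by (simp add: det2_mult2)

lemma sigma_eq_moeb_mat:
  assumes "l \<le> s"
  shows "\<sigma> l = moeb_mat (sigma_mat l)"
proof -
  have A: "det2 (ups_mat l) \<noteq> 0" "\<upsilon> l = moeb_mat (ups_mat l)" using ups_mat assms by auto
  have "\<sigma> l = moeb_mat (adj2 (ups_mat l)) \<circ> moeb_mat (diag_mat l) \<circ> moeb_mat (ups_mat l)"
    using sigma_diag[OF assms] A inv_moeb_mat[OF A(1)] by (simp add: diag_mat_def)
  also have "\<dots> = moeb_mat (sigma_mat l)"
    unfolding sigma_mat_def using A det2_diag_mat
    by (simp add: o_assoc[symmetric] moeb_mat_mult2 det2_mult2 mult2_assoc)
  finally show ?thesis .
qed

lemma inv_sigma_eq_moeb_mat: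
  assumes "l \<le> s"
  shows "inv (\<sigma> l) = moeb_mat (adj2 (sigma_mat l))"
  unfolding sigma_eq_moeb_mat[OF assms] by (rule inv_moeb_mat[OF det2_sigma_mat[OF assms]])

lemma bij_sigma: "l \<le> s \<Longrightarrow> bij (\<sigma> l)"
  using sigma_eq_moeb_mat det2_sigma_mat bij_moeb_mat by metis

lemma bij_ups: "l \<le> s \<Longrightarrow> bij (\<upsilon> l)"
  using ups_mat bij_moeb_mat by metis

lemma sigma_apply: "l \<le> s \<Longrightarrow> \<sigma> l y = inv (\<upsilon> l) (moeb (\<zeta> powi \<nu> l) 0 0 1 (\<upsilon> l y))"
  using sigma_diag by auto

lemma sigma_nontrivial:
  assumes "l \<le> s"
  shows "\<sigma> l \<noteq> id"
  using free_prod assms p_ge_2 unfolding free_product_cyclic_def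
  by (elim conjE allE[of _ "[(l, 1)]"]) auto

lemma multiplier_ne_1:
  assumes "l \<le> s"
  shows "\<zeta> powi \<nu> l \<noteq> 1"
proof
  assume "\<zeta> powi \<nu> l = 1"
  then have "moeb (\<zeta> powi \<nu> l) 0 0 1 = id"
    by (auto simp: moeb_def fun_eq_iff split: option.splits)
  then have "\<sigma> l = id"
    using sigma_diag[OF assms] bij_ups[OF assms] by (simp add: fun_eq_iff)
  then show False using sigma_nontrivial assms by blast
qed

lemma sigma_ofix: "l \<le> s \<Longrightarrow> \<sigma> l (ofix l) = ofix l"
  unfolding ofix_def by (simp add: sigma_apply bij_ups moeb_def)

lemma sigma_efix: "l \<le> s \<Longrightarrow> \<sigma> l (efix l) = efix l"
  unfolding efix_def by (simp add: sigma_apply bij_ups moeb_def)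

lemma inv_sigma_fixed: "l \<le> s \<Longrightarrow> \<sigma> l y = y \<Longrightarrow> inv (\<sigma> l) y = y"
  using bij_inv_apply[OF bij_sigma] by metis

lemma ofix_ne_efix: "l \<le> s \<Longrightarrow> ofix l \<noteq> efix l"
  unfolding ofix_def efix_def by (metis option.distinct(1) bij_ups bij_apply_inv)

lemma ofix_ordinary: "l \<le> s \<Longrightarrow> ofix l \<in> \<Omega>"
  using fixed_points_ordinary unfolding ofix_def by blast

lemma efix_ordinary: "l \<le> s \<Longrightarrow> efix l \<in> \<Omega>"
  using fixed_points_ordinary unfolding efix_def by blast

lemma sigma_fixed_points:
  assumes "l \<le> s" "\<sigma> l y = y"
  shows "y = ofix l \<or> y = efix l"
proof -
  have "moeb (\<zeta> powi \<nu> l) 0 0 1 (\<upsilon> l y) = \<upsilon> l y"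
    using assms sigma_apply[OF assms(1), of y] bij_ups by (metis bij_apply_inv)
  then have "\<upsilon> l y = Some 0 \<or> \<upsilon> l y = None"
    using multiplier_ne_1[OF assms(1)]
    by (cases "\<upsilon> l y") (auto simp: moeb_def split: if_splits)
  then show ?thesis
    unfolding ofix_def efix_def using bij_inv_apply[OF bij_ups[OF assms(1)]] by metis
qed

lemma sigma_mat_eigenvector:
  assumes "apply2 (diag_mat l) u = scale c u" "hcoord y = scale m (apply2 (adj2 (ups_mat l)) u)"
  shows "apply2 (sigma_mat l) (hcoord y) = scale (c * det2 (ups_mat l)) (hcoord y)"
  unfolding assms(2) sigma_mat_def
  by (simp add: apply2_scale apply2_mult2 apply2_apply2_adj2 assms(1) ac_simps)

text \<open>\<open>ofix l\<close> and \<open>efix l\<close> correspond to the eigenvectors \<open>(0, 1)\<close> and \<open>(-1, 0)\<close> of \<^term>\<open>diag_mat l\<close>.\<close>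

lemma hscale_ratio_fixed_points:
  assumes "l \<le> s"
  shows "hscale (sigma_mat l) (ofix l) / hscale (sigma_mat l) (efix l) = \<zeta> powi \<nu> l"
proof -
  let ?A = "ups_mat l"
  have A: "det2 ?A \<noteq> 0" "\<upsilon> l = moeb_mat ?A" using ups_mat assms by auto
  have inv_ups: "inv (\<upsilon> l) = moeb_mat (adj2 ?A)" using A inv_moeb_mat by simp
  obtain m where "hcoord (ofix l) = scale m (apply2 (adj2 ?A) (0, 1))"
    using hscale(2)[of "adj2 ?A" "Some 0"] A unfolding ofix_def inv_ups by auto
  then have "hscale (sigma_mat l) (ofix l) * (1 * det2 ?A) = 1"
    using sigma_mat_eigenvector[of l "(0, 1)" 1] det2_sigma_mat[OF assms]
    by (intro hscale_eigenvector) (auto simp: diag_mat_def)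
  moreover obtain m' where "hcoord (efix l) = scale m' (apply2 (adj2 ?A) (-1, 0))"
    using hscale(2)[of "adj2 ?A" None] A unfolding efix_def inv_ups by auto
  then have "hscale (sigma_mat l) (efix l) * (\<zeta> powi \<nu> l * det2 ?A) = 1"
    using sigma_mat_eigenvector[of l "(-1, 0)" "\<zeta> powi \<nu> l"] det2_sigma_mat[OF assms]
    by (intro hscale_eigenvector) (auto simp: diag_mat_def)
  ultimately have "hscale (sigma_mat l) (ofix l) = 1 / det2 ?A"
    "hscale (sigma_mat l) (efix l) = 1 / (\<zeta> powi \<nu> l * det2 ?A)"
    using A(1) zeta_nonzero by (simp_all add: field_simps)
  then show ?thesis
    using A(1) zeta_nonzero by simp
qed

lemma sigma0_conj_image: "(\<lambda>g. \<sigma> 0 \<circ> g \<circ> inv (\<sigma> 0)) ` \<Gamma> = \<Gamma>"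
  using sigma0_normalizes unfolding normalizer_def by (simp only: mem_Collect_eq)

lemma sigma0_conj: "\<gamma> \<in> \<Gamma> \<Longrightarrow> \<sigma> 0 \<circ> \<gamma> \<circ> inv (\<sigma> 0) \<in> \<Gamma>"
  using sigma0_conj_image by blast

lemma sigma0_conj_inv:
  assumes "\<gamma> \<in> \<Gamma>"
  shows "inv (\<sigma> 0) \<circ> \<gamma> \<circ> \<sigma> 0 \<in> \<Gamma>"
proof -
  obtain g' where g': "g' \<in> \<Gamma>" "\<gamma> = \<sigma> 0 \<circ> g' \<circ> inv (\<sigma> 0)"
    using assms sigma0_conj_image by blast
  then have "inv (\<sigma> 0) \<circ> \<gamma> \<circ> \<sigma> 0 = g'"
    using bij_sigma[of 0] by (simp add: fun_eq_iff)
  then show ?thesis using g' by simp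
qed

lemma sigma_comp_inv_sigma0: "l \<le> s \<Longrightarrow> \<sigma> l \<circ> inv (\<sigma> 0) \<in> \<Gamma>"
  using sigma_coset bij_sigma[of 0] by (cases "l = 0") auto

lemma sigma_comp_inv_sigma:
  assumes "i \<le> s" "j \<le> s"
  shows "\<sigma> i \<circ> inv (\<sigma> j) \<in> \<Gamma>"
proof -
  have "\<sigma> i \<circ> inv (\<sigma> j) = (\<sigma> i \<circ> inv (\<sigma> 0)) \<circ> inv (\<sigma> j \<circ> inv (\<sigma> 0))"
    using bij_sigma assms by (simp add: o_inv_distrib bij_imp_bij_inv inv_inv_eq fun_eq_iff)
  then show ?thesis using sigma_comp_inv_sigma0 assms Gamma_comp Gamma_inv by metis
qed

lemma sigma_conj:
  assumes "l \<le> s" "\<gamma> \<in> \<Gamma>"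
  shows "\<sigma> l \<circ> \<gamma> \<circ> inv (\<sigma> l) \<in> \<Gamma>" "inv (\<sigma> l) \<circ> \<gamma> \<circ> \<sigma> l \<in> \<Gamma>"
proof -
  define x where "x = \<sigma> l \<circ> inv (\<sigma> 0)"
  have x: "x \<in> \<Gamma>" "bij x" using sigma_comp_inv_sigma0 assms bij_Gamma x_def by auto
  have sl: "\<sigma> l = x \<circ> \<sigma> 0" using bij_sigma[of 0] x_def by (simp add: fun_eq_iff)
  have "\<sigma> l \<circ> \<gamma> \<circ> inv (\<sigma> l) = x \<circ> (\<sigma> 0 \<circ> \<gamma> \<circ> inv (\<sigma> 0)) \<circ> inv x"
    unfolding sl using x bij_sigma[of 0] by (simp add: o_inv_distrib fun_eq_iff)
  then show "\<sigma> l \<circ> \<gamma> \<circ> inv (\<sigma> l) \<in> \<Gamma>"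
    using sigma0_conj assms x Gamma_comp Gamma_inv by metis
  have "inv (\<sigma> l) \<circ> \<gamma> \<circ> \<sigma> l = inv (\<sigma> 0) \<circ> (inv x \<circ> \<gamma> \<circ> x) \<circ> \<sigma> 0"
    unfolding sl using x bij_sigma[of 0] by (simp add: o_inv_distrib fun_eq_iff)
  then show "inv (\<sigma> l) \<circ> \<gamma> \<circ> \<sigma> l \<in> \<Gamma>"
    using sigma0_conj_inv assms x Gamma_comp Gamma_inv by metis
qed

end

section \<open>Consequences of discontinuity\<close>

lemma LIMSEQ_zero_bounded:
  fixes X Y :: "nat \<Rightarrow> real"
  assumes "\<And>n. 0 \<le> X n" "\<And>n. X n \<le> C * Y n" "Y \<longlonglongrightarrow> 0"
  shows "X \<longlonglongrightarrow> 0"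
proof -
  have "(\<lambda>n. C * Y n) \<longlonglongrightarrow> 0" using tendsto_mult[OF tendsto_const assms(3), of C] by simp
  then show ?thesis
    using assms(1,2) by (intro tendsto_sandwich[of "\<lambda>_. 0" X sequentially "\<lambda>n. C * Y n"]) auto
qed

lemma inj_seq_tendsto_0:
  assumes "\<forall>\<eta>>0. \<exists>\<gamma>\<in>G. 0 < d \<gamma> \<and> d \<gamma> < (\<eta>::real)"
  shows "\<exists>q. (\<forall>n. q n \<in> G) \<and> inj q \<and> (\<lambda>n. d (q n)) \<longlonglongrightarrow> 0"
proof -
  define pick where "pick \<eta> = (SOME \<gamma>. \<gamma> \<in> G \<and> 0 < d \<gamma> \<and> d \<gamma> < \<eta>)" for \<eta>
  have pick: "pick \<eta> \<in> G \<and> 0 < d (pick \<eta>) \<and> d (pick \<eta>) < \<eta>" if "0 < \<eta>" for \<eta>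
    unfolding pick_def by (rule someI_ex) (use assms that in blast)
  define q where "q = rec_nat (pick 1) (\<lambda>n prev. pick (min (1 / (real n + 2)) (d prev)))"
  have q0: "q 0 = pick 1" and qS: "q (Suc n) = pick (min (1 / (real n + 2)) (d (q n)))" for n
    unfolding q_def by simp_all
  have P: "q n \<in> G \<and> 0 < d (q n) \<and> d (q n) < 1 / (real n + 1)" for n
  proof (induction n)
    case 0 then show ?case using pick[of 1] q0 by simp
  next
    case (Suc n)
    have m: "0 < min (1 / (real n + 2)) (d (q n))" using Suc by simp
    have "q (Suc n) \<in> G \<and> 0 < d (q (Suc n)) \<and> d (q (Suc n)) < min (1 / (real n + 2)) (d (q n))"
      using pick[OF m] qS[of n] by simp
    then show ?case by (simp add: add.commute)
  qed
  have dec: "d (q (Suc n)) < d (q n)" for n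
  proof -
    have "0 < min (1 / (real n + 2)) (d (q n))" using P[of n] by simp
    then show ?thesis using pick qS[of n] by fastforce
  qed
  have sm: "strict_mono (\<lambda>n. - d (q n))" unfolding strict_mono_Suc_iff using dec by simp
  have "inj q"
  proof (rule injI)
    fix m n assume "q m = q n"
    then have "- d (q m) = - d (q n)" by simp
    then show "m = n" using strict_mono_eq[OF sm] by blast
  qed
  moreover have "(\<lambda>n. d (q n)) \<longlonglongrightarrow> 0"
  proof (rule LIMSEQ_zero_bounded[of _ 1 "\<lambda>n. inverse (real (Suc n))"])
    show "0 \<le> d (q n)" for n using P[of n] by simp
    show "d (q n) \<le> 1 * inverse (real (Suc n))" for n
      using P[of n] by (simp add: inverse_eq_divide add.commute)
  qed (use LIMSEQ_inverse_real_of_nat in auto)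
  ultimately show ?thesis using P by blast
qed

context cyclic_schottky
begin

lemma ordinaryD:
  assumes "x \<in> \<Omega>" "\<forall>n. gs n \<in> \<Gamma>" "inj gs" "(\<lambda>n. chord v (gs n y) x) \<longlonglongrightarrow> 0"
  shows False
  using assms unfolding ordinary_def limit_set_def by blast

lemma ordinary_moeb_mat:
  assumes "det2 M \<noteq> 0" "x \<in> \<Omega>"
    and "\<And>\<gamma>. \<gamma> \<in> \<Gamma> \<Longrightarrow> inv (moeb_mat M) \<circ> \<gamma> \<circ> moeb_mat M \<in> \<Gamma>"
  shows "moeb_mat M x \<in> \<Omega>"
proof (rule ccontr)
  assume "moeb_mat M x \<notin> \<Omega>"
  then obtain y gs where gs: "\<forall>n. gs n \<in> \<Gamma>" "inj gs" "(\<lambda>n. chord v (gs n y) (moeb_mat M x)) \<longlonglongrightarrow> 0"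
    unfolding ordinary_def limit_set_def by blast
  let ?h = "moeb_mat M" and ?N = "adj2 M"
  have b: "bij ?h" using bij_moeb_mat assms by blast
  have ih: "inv ?h = moeb_mat ?N" using inv_moeb_mat assms by blast
  define hs where "hs n = inv ?h \<circ> gs n \<circ> ?h" for n
  have "\<forall>n. hs n \<in> \<Gamma>" using gs assms unfolding hs_def by blast
  moreover have "inj hs"
  proof (rule injI)
    fix m n assume "hs m = hs n"
    then have "?h \<circ> hs m \<circ> inv ?h = ?h \<circ> hs n \<circ> inv ?h" by simp
    then have "gs m = gs n" unfolding hs_def using b by (simp add: fun_eq_iff)
    then show "m = n" using gs(2) by (simp add: inj_eq)
  qed
  moreover have "(\<lambda>n. chord v (hs n (inv ?h y)) x) \<longlonglongrightarrow> 0"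
  proof (rule LIMSEQ_zero_bounded[of _ "mnorm ?N ^ 2 / v (det2 ?N)"])
    show "0 \<le> chord v (hs n (inv ?h y)) x" for n by simp
    show "chord v (hs n (inv ?h y)) x \<le> mnorm ?N ^ 2 / v (det2 ?N) * chord v (gs n y) (moeb_mat M x)"
      for n
    proof -
      have "chord v (hs n (inv ?h y)) x
          = chord v (moeb_mat ?N (gs n y)) (moeb_mat ?N (moeb_mat M x))"
        unfolding hs_def ih[symmetric] using b by simp
      also have "\<dots> \<le> mnorm ?N ^ 2 * chord v (gs n y) (moeb_mat M x) / v (det2 ?N)"
        using chord_moeb_mat_le[of ?N] assms by simp
      finally show ?thesis by simp
    qed
  qed (use gs in auto)
  ultimately show False using ordinaryD[OF assms(2)] by blast
qed

lemma Gamma_ordinary: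
  assumes "\<gamma> \<in> \<Gamma>" "x \<in> \<Omega>"
  shows "\<gamma> x \<in> \<Omega>"
proof -
  obtain M where M: "det2 M \<noteq> 0" "\<gamma> = moeb_mat M" using Gamma_moeb_mat assms by blast
  have "inv (moeb_mat M) \<circ> \<delta> \<circ> moeb_mat M \<in> \<Gamma>" if "\<delta> \<in> \<Gamma>" for \<delta>
    using that assms M Gamma_comp Gamma_inv by metis
  then show ?thesis using ordinary_moeb_mat[OF M(1) assms(2)] M by blast
qed

lemma finite_orbit_near:
  assumes "w \<in> \<Omega>"
  shows "\<exists>\<eta>>0. finite {\<gamma>\<in>\<Gamma>. chord v (\<gamma> x) w < \<eta>}"
proof (rule ccontr)
  assume na: "\<not> ?thesis"
  show False
  proof (cases "finite {\<gamma>\<in>\<Gamma>. \<gamma> x = w}")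
    case False
    then obtain f :: "nat \<Rightarrow> _" where f: "inj f" "range f \<subseteq> {\<gamma>\<in>\<Gamma>. \<gamma> x = w}"
      using infinite_countable_subset by blast
    then have "chord v (f n x) w = 0" for n by (simp add: image_subset_iff)
    then have "(\<lambda>n. chord v (f n x) w) \<longlonglongrightarrow> 0" by simp
    then show False using ordinaryD[OF assms, of f] f by blast
  next
    case True
    have "\<forall>\<eta>>0. \<exists>\<gamma>\<in>\<Gamma>. 0 < chord v (\<gamma> x) w \<and> chord v (\<gamma> x) w < \<eta>"
    proof (intro allI impI)
      fix \<eta> :: real assume "0 < \<eta>"
      then have "infinite {\<gamma>\<in>\<Gamma>. chord v (\<gamma> x) w < \<eta>}" using na by blast
      then have "infinite ({\<gamma>\<in>\<Gamma>. chord v (\<gamma> x) w < \<eta>} - {\<gamma>\<in>\<Gamma>. \<gamma> x = w})" using True by simp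
      then obtain \<gamma> where "\<gamma> \<in> {\<gamma>\<in>\<Gamma>. chord v (\<gamma> x) w < \<eta>} - {\<gamma>\<in>\<Gamma>. \<gamma> x = w}"
        using infinite_imp_nonempty by blast
      then show "\<exists>\<gamma>\<in>\<Gamma>. 0 < chord v (\<gamma> x) w \<and> chord v (\<gamma> x) w < \<eta>" using chord_pos by auto
    qed
    then obtain q where "\<forall>n. q n \<in> \<Gamma>" "inj q" "(\<lambda>n. chord v (q n x) w) \<longlonglongrightarrow> 0"
      using inj_seq_tendsto_0[where d = "\<lambda>\<gamma>. chord v (\<gamma> x) w"] by blast
    then show False using ordinaryD[OF assms] by blast
  qed
qed

lemma Gamma_fix_ordinary_imp_id:
  assumes "\<delta> \<in> \<Gamma>" "w \<in> \<Omega>" "\<delta> w = w"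
  shows "\<delta> = id"
proof (rule ccontr)
  assume "\<delta> \<noteq> id"
  have "inj (\<lambda>n. \<delta> ^^ n)"
  proof (rule injI)
    fix m n
    assume "\<delta> ^^ m = \<delta> ^^ n"
    then show "m = n"
      using Gamma_funpow_eq_imp_id[OF assms(1)] \<open>\<delta> \<noteq> id\<close> by (metis linorder_neqE_nat)
  qed
  moreover have "(\<delta> ^^ n) w = w" for n using assms(3) by (induction n) auto
  ultimately show False
    using ordinaryD[OF assms(2), of "\<lambda>n. \<delta> ^^ n" w] Gamma_funpow[OF assms(1)] by simp
qed

lemma Gamma_normalized_mat: "\<gamma> \<in> \<Gamma> \<Longrightarrow> \<exists>M. det2 M \<noteq> 0 \<and> \<gamma> = moeb_mat M \<and> mnorm M = 1"
  using Gamma_moeb_mat normalized_mat_exists by metis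

definition norm_mat :: "('k option \<Rightarrow> 'k option) \<Rightarrow> 'k mat2" where
  "norm_mat \<gamma> = (SOME M. det2 M \<noteq> 0 \<and> \<gamma> = moeb_mat M \<and> mnorm M = 1)"

lemma norm_mat:
  assumes "\<gamma> \<in> \<Gamma>"
  shows "det2 (norm_mat \<gamma>) \<noteq> 0" "\<gamma> = moeb_mat (norm_mat \<gamma>)" "mnorm (norm_mat \<gamma>) = 1"
  using someI_ex[OF Gamma_normalized_mat[OF assms]] unfolding norm_mat_def by auto

lemma inv_norm_mat:
  assumes "\<gamma> \<in> \<Gamma>"
  shows "inv \<gamma> = moeb_mat (adj2 (norm_mat \<gamma>))"
  using norm_mat[OF assms] inv_moeb_mat by metis

lemma adj2_column_norm:
  assumes "mnorm M = 1"
  shows "vnorm (apply2 (adj2 M) (0, 1)) = 1 \<or> vnorm (apply2 (adj2 M) (-1, 0)) = 1"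
proof -
  obtain a b c d where M: "M = (a, b, c, d)" by (cases M)
  have m: "max (max (v a) (v b)) (max (v c) (v d)) = 1" using assms M by simp
  then have le: "v a \<le> 1" "v b \<le> 1" "v c \<le> 1" "v d \<le> 1"
    by (metis max.cobounded1 max.cobounded2 order_trans)+
  have "v a = 1 \<or> v b = 1 \<or> v c = 1 \<or> v d = 1" using m unfolding max_def by presburger
  moreover have "vnorm (apply2 (adj2 M) (0, 1)) = max (v b) (v a)"
    "vnorm (apply2 (adj2 M) (-1, 0)) = max (v d) (v c)"
    using M by simp_all
  ultimately show ?thesis using le by (auto simp: max_def)
qed

lemma chord_inv_le:
  assumes "\<gamma> \<in> \<Gamma>" "vnorm Y = 1" "hcoord y = Y" "vnorm (apply2 (adj2 (norm_mat \<gamma>)) Y) = 1"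
  shows "chord v (inv \<gamma> y) a \<le> vnorm (apply2 (norm_mat \<gamma>) (hcoord a))"
proof -
  let ?M = "norm_mat \<gamma>" let ?N = "adj2 ?M"
  have dN: "det2 ?N \<noteq> 0" using norm_mat[OF assms(1)] by simp
  have "chord v (inv \<gamma> y) a
      = v (wedge (apply2 ?N Y) (hcoord a)) / (vnorm (apply2 ?N Y) * vnorm (hcoord a))"
    unfolding inv_norm_mat[OF assms(1)]
    using chord_eq_scaled[OF hscale(2)[OF dN, of y], of a 1 "hcoord a"] assms(3) by simp
  also have "\<dots> = v (wedge Y (apply2 ?M (hcoord a))) / vnorm (hcoord a)"
    using assms(4) by (simp add: wedge_adj2)
  also have "\<dots> \<le> vnorm Y * vnorm (apply2 ?M (hcoord a)) / vnorm (hcoord a)"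
    using v_wedge_le vnorm_hcoord_pos by (intro divide_right_mono) auto
  also have "\<dots> \<le> vnorm (apply2 ?M (hcoord a))"
  proof -
    have "vnorm (apply2 ?M (hcoord a)) * 1 \<le> vnorm (apply2 ?M (hcoord a)) * vnorm (hcoord a)"
      using vnorm_hcoord_ge_1[of a] by (intro mult_left_mono) auto
    then show ?thesis using assms(2) vnorm_hcoord_pos[of a] by (simp add: divide_le_eq)
  qed
  finally show ?thesis .
qed

text \<open>The adjugate of a normalised matrix has a column of norm \<open>1\<close>, so \<open>inv \<gamma>\<close> moves \<open>0\<close> or
  \<open>\<infinity>\<close> to within \<open>vnorm (apply2 (norm_mat \<gamma>) (hcoord a))\<close> of \<open>a\<close>.\<close>

lemma finite_small_apply2:
  assumes "a \<in> \<Omega>"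
  shows "\<exists>\<eta>>0. finite {\<gamma>\<in>\<Gamma>. vnorm (apply2 (norm_mat \<gamma>) (hcoord a)) < \<eta>}"
proof -
  obtain \<eta>0 where e0: "\<eta>0 > 0" "finite {\<gamma>\<in>\<Gamma>. chord v (\<gamma> (Some 0)) a < \<eta>0}"
    using finite_orbit_near assms by blast
  obtain \<eta>1 where e1: "\<eta>1 > 0" "finite {\<gamma>\<in>\<Gamma>. chord v (\<gamma> None) a < \<eta>1}"
    using finite_orbit_near assms by blast
  let ?A = "{\<gamma>\<in>\<Gamma>. chord v (\<gamma> (Some 0)) a < \<eta>0} \<union> {\<gamma>\<in>\<Gamma>. chord v (\<gamma> None) a < \<eta>1}"
  have "{\<gamma>\<in>\<Gamma>. vnorm (apply2 (norm_mat \<gamma>) (hcoord a)) < min \<eta>0 \<eta>1} \<subseteq> inv ` ?A"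
  proof
    fix \<gamma> assume g: "\<gamma> \<in> {\<gamma>\<in>\<Gamma>. vnorm (apply2 (norm_mat \<gamma>) (hcoord a)) < min \<eta>0 \<eta>1}"
    then have gG: "\<gamma> \<in> \<Gamma>" by simp
    have ig: "inv \<gamma> \<in> \<Gamma>" using Gamma_inv gG by blast
    have "inv \<gamma> \<in> ?A"
    proof (cases "vnorm (apply2 (adj2 (norm_mat \<gamma>)) (0, 1)) = 1")
      case True
      have "chord v (inv \<gamma> (Some 0)) a \<le> vnorm (apply2 (norm_mat \<gamma>) (hcoord a))"
        using chord_inv_le[OF gG _ _ True] by simp
      then show ?thesis using g ig by auto
    next
      case False
      then have F: "vnorm (apply2 (adj2 (norm_mat \<gamma>)) (-1, 0)) = 1"
        using adj2_column_norm norm_mat[OF gG] by blast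
      have "chord v (inv \<gamma> None) a \<le> vnorm (apply2 (norm_mat \<gamma>) (hcoord a))"
        using chord_inv_le[OF gG _ _ F] by simp
      then show ?thesis using g ig by auto
    qed
    moreover have "\<gamma> = inv (inv \<gamma>)" using bij_Gamma gG by (simp add: inv_inv_eq)
    ultimately show "\<gamma> \<in> inv ` ?A" by blast
  qed
  moreover have "finite (inv ` ?A)" using e0 e1 by blast
  ultimately show ?thesis using e0 e1 by (intro exI[of _ "min \<eta>0 \<eta>1"]) (auto intro: finite_subset)
qed

lemma orbit_separated:
  assumes "a \<in> \<Omega>"
  shows "\<exists>m>0. \<forall>\<delta>\<in>\<Gamma>. \<delta> \<noteq> id \<longrightarrow> m \<le> chord v (\<delta> a) a"
proof -
  obtain \<eta>0 where e0: "\<eta>0 > 0" "finite {\<gamma>\<in>\<Gamma>. chord v (\<gamma> a) a < \<eta>0}"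
    using finite_orbit_near assms by blast
  let ?E = "{\<gamma>\<in>\<Gamma>. chord v (\<gamma> a) a < \<eta>0} - {id}"
  define m where "m = Min (insert \<eta>0 ((\<lambda>\<delta>. chord v (\<delta> a) a) ` ?E))"
  have fin: "finite (insert \<eta>0 ((\<lambda>\<delta>. chord v (\<delta> a) a) ` ?E))" using e0 by blast
  have pos: "\<forall>x\<in>insert \<eta>0 ((\<lambda>\<delta>. chord v (\<delta> a) a) ` ?E). 0 < x"
  proof
    fix x assume "x \<in> insert \<eta>0 ((\<lambda>\<delta>. chord v (\<delta> a) a) ` ?E)"
    then consider "x = \<eta>0" | \<delta> where "\<delta> \<in> ?E" "x = chord v (\<delta> a) a" by blast
    then show "0 < x"
    proof cases
      case 2
      then have "\<delta> a \<noteq> a" using Gamma_fix_ordinary_imp_id assms by blast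
      then show ?thesis using 2 chord_pos by simp
    qed (use e0 in simp)
  qed
  have "0 < m" unfolding m_def using fin pos by (subst Min_gr_iff) auto
  moreover have "m \<le> chord v (\<delta> a) a" if "\<delta> \<in> \<Gamma>" "\<delta> \<noteq> id" for \<delta>
  proof (cases "chord v (\<delta> a) a < \<eta>0")
    case True
    then have "chord v (\<delta> a) a \<in> insert \<eta>0 ((\<lambda>\<delta>. chord v (\<delta> a) a) ` ?E)" using that by blast
    then show ?thesis unfolding m_def using fin by simp
  next
    case False
    have "m \<le> \<eta>0" unfolding m_def using fin by simp
    then show ?thesis using False by simp
  qed
  ultimately show ?thesis by blast
qed

lemma chord_inv_comp_le:
  assumes "\<gamma> \<in> \<Gamma>" "\<gamma>' \<in> \<Gamma>"
  shows "chord v ((inv \<gamma> \<circ> \<gamma>') a) a \<le> chord v (\<gamma>' a) (\<gamma> a) / v (det2 (norm_mat \<gamma>))"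
proof -
  let ?N = "adj2 (norm_mat \<gamma>)"
  have N: "det2 ?N \<noteq> 0" "mnorm ?N = 1" "inv \<gamma> = moeb_mat ?N"
    using norm_mat[OF assms(1)] inv_norm_mat[OF assms(1)] by auto
  have "chord v ((inv \<gamma> \<circ> \<gamma>') a) a = chord v (moeb_mat ?N (\<gamma>' a)) (moeb_mat ?N (\<gamma> a))"
    using N(3) bij_Gamma[OF assms(1)] by (metis bij_inv_apply comp_apply)
  also have "\<dots> \<le> chord v (\<gamma>' a) (\<gamma> a) / v (det2 (norm_mat \<gamma>))"
    using chord_moeb_mat_le[OF N(1)] N(2) by simp
  finally show ?thesis .
qed

text \<open>If infinitely many normalised matrices had determinant bounded below, two of them
  would move \<open>a\<close> to nearby points (by discontinuity), and then \<open>chord_inv_comp_le\<close>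
  would produce a nontrivial element of \<open>\<Gamma>\<close> moving \<open>a\<close> too little.\<close>

lemma finite_large_det:
  assumes "a \<in> \<Omega>" "\<eta> > 0"
  shows "finite {\<gamma>\<in>\<Gamma>. \<eta> \<le> v (det2 (norm_mat \<gamma>))}"
proof (rule ccontr)
  assume "infinite {\<gamma>\<in>\<Gamma>. \<eta> \<le> v (det2 (norm_mat \<gamma>))}"
  then obtain f :: "nat \<Rightarrow> _" where f: "inj f" "range f \<subseteq> {\<gamma>\<in>\<Gamma>. \<eta> \<le> v (det2 (norm_mat \<gamma>))}"
    using infinite_countable_subset by blast
  have fG: "f n \<in> \<Gamma>" and fd: "\<eta> \<le> v (det2 (norm_mat (f n)))" for n using f by auto
  obtain r q where r: "strict_mono r" and q: "(\<lambda>n. chord v (f (r n) a) q) \<longlonglongrightarrow> 0"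
    using schottky fG unfolding schottky_def discontinuous_grp_def by blast
  obtain m where m: "m > 0" "\<forall>\<delta>\<in>\<Gamma>. \<delta> \<noteq> id \<longrightarrow> m \<le> chord v (\<delta> a) a"
    using orbit_separated assms by blast
  have "0 < m * \<eta>" using m assms(2) by simp
  from q[unfolded LIMSEQ_iff, rule_format, OF this] obtain N
    where N: "\<forall>n\<ge>N. chord v (f (r n) a) q < m * \<eta>"
    by auto
  define \<delta> where "\<delta> = inv (f (r N)) \<circ> f (r (Suc N))"
  have "\<delta> \<in> \<Gamma>" unfolding \<delta>_def using fG Gamma_inv Gamma_comp by blast
  moreover have "\<delta> \<noteq> id"
  proof
    assume "\<delta> = id"
    then have "f (r (Suc N)) = f (r N)"
      unfolding \<delta>_def using bij_Gamma[OF fG] by (metis bij_apply_inv comp_apply fun_eq_iff id_apply)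
    then show False using f(1) r by (simp add: inj_eq strict_mono_eq)
  qed
  ultimately have "m \<le> chord v (\<delta> a) a" using m by blast
  also have "\<dots> \<le> chord v (f (r (Suc N)) a) (f (r N) a) / v (det2 (norm_mat (f (r N))))"
    unfolding \<delta>_def using chord_inv_comp_le fG by blast
  also have "\<dots> \<le> chord v (f (r (Suc N)) a) (f (r N) a) / \<eta>"
    using fd[of "r N"] assms(2) by (intro divide_left_mono mult_pos_pos) auto
  also have "\<dots> < m"
  proof -
    have "chord v (f (r (Suc N)) a) q < m * \<eta>" "chord v q (f (r N) a) < m * \<eta>"
      using N chord_sym[of q] by auto
    then have "chord v (f (r (Suc N)) a) (f (r N) a) < m * \<eta>"
      using chord_ultra[of "f (r (Suc N)) a" "f (r N) a" q] by linarith
    then show ?thesis using assms(2) by (simp add: divide_less_eq)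
  qed
  finally show False by simp
qed

text \<open>By \<open>chord_moeb_mat\<close>, \<open>\<gamma> a\<close> and \<open>\<gamma> b\<close> can only be far apart if the normalised matrix of
  \<open>\<gamma>\<close> has a large determinant or maps \<open>a\<close> or \<open>b\<close> to a short vector.\<close>

lemma finite_chord_ge:
  assumes "a \<in> \<Omega>" "b \<in> \<Omega>" "\<epsilon> > 0"
  shows "finite {\<gamma>\<in>\<Gamma>. \<epsilon> \<le> chord v (\<gamma> a) (\<gamma> b)}"
proof -
  obtain ea where ea: "ea > 0" "finite {\<gamma>\<in>\<Gamma>. vnorm (apply2 (norm_mat \<gamma>) (hcoord a)) < ea}"
    using finite_small_apply2 assms by blast
  obtain eb where eb: "eb > 0" "finite {\<gamma>\<in>\<Gamma>. vnorm (apply2 (norm_mat \<gamma>) (hcoord b)) < eb}"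
    using finite_small_apply2 assms by blast
  define C where "C = vnorm (hcoord a) * vnorm (hcoord b)"
  have Cp: "C > 0" unfolding C_def using vnorm_hcoord_pos by simp
  define e' where "e' = \<epsilon> * ea * eb / C"
  have e'p: "e' > 0" unfolding e'_def using Cp ea eb assms by simp
  have "{\<gamma>\<in>\<Gamma>. \<epsilon> \<le> chord v (\<gamma> a) (\<gamma> b)} \<subseteq>
      {\<gamma>\<in>\<Gamma>. vnorm (apply2 (norm_mat \<gamma>) (hcoord a)) < ea} \<union>
      {\<gamma>\<in>\<Gamma>. vnorm (apply2 (norm_mat \<gamma>) (hcoord b)) < eb} \<union> {\<gamma>\<in>\<Gamma>. e' \<le> v (det2 (norm_mat \<gamma>))}"
  proof
    fix \<gamma> assume g: "\<gamma> \<in> {\<gamma>\<in>\<Gamma>. \<epsilon> \<le> chord v (\<gamma> a) (\<gamma> b)}"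
    then have gG: "\<gamma> \<in> \<Gamma>" by simp
    let ?M = "norm_mat \<gamma>"
    show "\<gamma> \<in> {\<gamma>\<in>\<Gamma>. vnorm (apply2 (norm_mat \<gamma>) (hcoord a)) < ea} \<union>
      {\<gamma>\<in>\<Gamma>. vnorm (apply2 (norm_mat \<gamma>) (hcoord b)) < eb} \<union> {\<gamma>\<in>\<Gamma>. e' \<le> v (det2 (norm_mat \<gamma>))}"
    proof (rule ccontr)
      assume "\<not> ?thesis"
      then have A: "ea \<le> vnorm (apply2 ?M (hcoord a))" "eb \<le> vnorm (apply2 ?M (hcoord b))"
          "v (det2 ?M) < e'"
        using gG by auto
      have "\<epsilon> \<le> chord v (\<gamma> a) (\<gamma> b)" using g by simp
      also have "\<dots> = v (det2 ?M) * v (wedge (hcoord a) (hcoord b))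
          / (vnorm (apply2 ?M (hcoord a)) * vnorm (apply2 ?M (hcoord b)))"
        using chord_moeb_mat[OF norm_mat(1)[OF gG]] norm_mat(2)[OF gG] by metis
      also have "\<dots> \<le> v (det2 ?M) * C / (ea * eb)"
        unfolding C_def using A ea eb
        by (intro frac_le mult_left_mono v_wedge_le mult_mono) (auto intro: mult_pos_pos)
      also have "\<dots> < e' * C / (ea * eb)"
        using A(3) Cp ea eb by (intro divide_strict_right_mono mult_strict_right_mono) auto
      also have "\<dots> = \<epsilon>" unfolding e'_def using Cp ea eb by simp
      finally show False by simp
    qed
  qed
  moreover have "finite {\<gamma>\<in>\<Gamma>. e' \<le> v (det2 (norm_mat \<gamma>))}" using finite_large_det assms e'p by blast
  ultimately show ?thesis using ea eb by (auto intro: finite_subset)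
qed

end

section \<open>Theta functions\<close>

definition theta_partial ::
    "'k::field option \<Rightarrow> 'k option \<Rightarrow> 'k \<Rightarrow> ('k option \<Rightarrow> 'k option) set \<Rightarrow> 'k" where
  "theta_partial a b z F = (\<Prod>\<gamma>\<in>F. theta_fac z (\<gamma> a) (\<gamma> b))"

lemma theta_fac_wedge: "theta_fac w \<alpha> \<beta> = wedge (w, 1) (hcoord \<alpha>) / wedge (w, 1) (hcoord \<beta>)"
  unfolding theta_fac_def by (cases \<alpha>; cases \<beta>) auto

lemma theta_fac_moeb_mat:
  assumes "det2 M \<noteq> 0" "moeb_mat M (Some z) = Some w"
  shows "theta_fac w (moeb_mat M \<alpha>) (moeb_mat M \<beta>) = (hscale M \<alpha> / hscale M \<beta>) * theta_fac z \<alpha> \<beta>"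
proof -
  have hz: "(w, 1) = scale (hscale M (Some z)) (apply2 M (z, 1))"
    using hscale(2)[OF assms(1), of "Some z"] assms(2) by simp
  have kz: "hscale M (Some z) \<noteq> 0" using hscale(1)[OF assms(1)] by blast
  have e: "wedge (w, 1) (hcoord (moeb_mat M x))
      = hscale M (Some z) * det2 M * (hscale M x * wedge (z, 1) (hcoord x))" for x
    unfolding hz hscale(2)[OF assms(1), of x] by (simp add: wedge_apply2)
  show ?thesis unfolding theta_fac_wedge e using kz assms(1)
    by (simp add: mult_divide_mult_cancel_left_if times_divide_times_eq
        del: mult_divide_mult_cancel_left)
qed

context nonarch_valuation
begin

lemma v_theta_fac_diff_one_less:
  assumes "0 < e" "0 < e1" "0 < e2" "0 < e3"
    and "e1 \<le> chord v \<alpha> None" "e2 \<le> chord v \<beta> None" "e3 \<le> chord v \<beta> (Some z)"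
    and "chord v \<alpha> \<beta> < e * e1 * e2 * e3"
  shows "v (theta_fac z \<alpha> \<beta> - 1) < e"
proof -
  obtain y where y: "\<alpha> = Some y" using assms(2,5) by (cases \<alpha>) (auto simp: chord_def)
  obtain x where x: "\<beta> = Some x" using assms(3,6) by (cases \<beta>) (auto simp: chord_def)
  have pos: "0 < max 1 (v x)" "0 < max 1 (v y)" "0 < max 1 (v z)" by (auto simp: less_max_iff_disj)
  have "e1 * max 1 (v y) \<le> 1" "e2 * max 1 (v x) \<le> 1"
    using assms(5,6) pos unfolding x y by (simp_all add: chord_def le_divide_eq)
  then have my: "max 1 (v y) \<le> 1 / e1" and mx: "max 1 (v x) \<le> 1 / e2"
    using assms(2,3) by (simp_all add: le_divide_eq mult.commute)
  have "e3 * (max 1 (v x) * max 1 (v z)) \<le> v (x - z)"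
    using assms(7) pos unfolding x by (simp add: chord_def le_divide_eq)
  moreover have "1 \<le> max 1 (v x) * max 1 (v z)"
    using mult_mono[of 1 "max 1 (v x)" 1 "max 1 (v z)"] by simp
  ultimately have vxz: "e3 \<le> v (z - x)"
    using assms(4) v_diff_commute[of x z] by (smt (verit) mult_le_cancel_left1)
  have "v (y - x) < e * e1 * e2 * e3 * (max 1 (v y) * max 1 (v x))"
    using assms(8) pos unfolding x y by (simp add: chord_def divide_less_eq)
  also have "\<dots> \<le> e * e1 * e2 * e3 * ((1 / e1) * (1 / e2))"
    using my mx pos assms(1-4) by (intro mult_left_mono mult_mono) auto
  also have "\<dots> = e * e3" using assms(2,3) by simp
  finally have vyx: "v (y - x) < e * e3" .
  have "z - x \<noteq> 0" using vxz assms(4) by auto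
  then have "theta_fac z \<alpha> \<beta> - 1 = (x - y) / (z - x)"
    unfolding x y theta_fac_def by (simp add: field_simps)
  then have "v (theta_fac z \<alpha> \<beta> - 1) = v (y - x) / v (z - x)"
    by (simp add: v_divide v_diff_commute)
  also have "\<dots> \<le> v (y - x) / e3"
    using vxz assms(4) by (intro divide_left_mono mult_pos_pos) auto
  also have "\<dots> < e"
    using vyx assms(4) by (simp add: divide_less_eq)
  finally show ?thesis .
qed

text \<open>The partial products at \<open>M z\<close> and at \<open>z\<close> differ by a factor independent of \<open>z\<close>,
  namely the product of the ratios \<open>hscale M (\<gamma> a') / hscale M (\<gamma> b')\<close>.\<close>

lemma theta_transform_ratio:
  assumes M: "det2 M \<noteq> 0" and phi: "bij_betw \<phi> S' S"
    and ab: "\<And>\<gamma>. \<gamma> \<in> S' \<Longrightarrow> moeb_mat M (\<gamma> a') = \<phi> \<gamma> a \<and> moeb_mat M (\<gamma> b') = \<phi> \<gamma> b"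
    and z0: "moeb_mat M (Some z0) = Some w0" "finset_lim S' (theta_partial a' b' z0) L0'"
      "finset_lim S (theta_partial a b w0) L0" "L0' \<noteq> 0"
    and z: "moeb_mat M (Some z) = Some w" "finset_lim S' (theta_partial a' b' z) L1"
      "finset_lim S (theta_partial a b w) L2"
  shows "L2 = L1 * (L0 / L0')"
proof -
  define \<rho> where "\<rho> F = (\<Prod>\<gamma>\<in>F. hscale M (\<gamma> a') / hscale M (\<gamma> b'))" for F
  have key: "theta_partial a b w' (\<phi> ` F) = theta_partial a' b' z' F * \<rho> F"
    if "finite F" "F \<subseteq> S'" "moeb_mat M (Some z') = Some w'" for F z' w'
  proof -
    have inj: "inj_on \<phi> F" using phi that(2) bij_betw_def inj_on_subset by metis
    have "theta_partial a b w' (\<phi> ` F) = (\<Prod>\<gamma>\<in>F. theta_fac w' (\<phi> \<gamma> a) (\<phi> \<gamma> b))"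
      unfolding theta_partial_def using prod.reindex[OF inj] by simp
    also have "\<dots> = (\<Prod>\<gamma>\<in>F. (hscale M (\<gamma> a') / hscale M (\<gamma> b')) * theta_fac z' (\<gamma> a') (\<gamma> b'))"
    proof (rule prod.cong)
      fix \<gamma>
      assume "\<gamma> \<in> F"
      then have "moeb_mat M (\<gamma> a') = \<phi> \<gamma> a" "moeb_mat M (\<gamma> b') = \<phi> \<gamma> b" using ab that(2) by auto
      then show "theta_fac w' (\<phi> \<gamma> a) (\<phi> \<gamma> b)
          = (hscale M (\<gamma> a') / hscale M (\<gamma> b')) * theta_fac z' (\<gamma> a') (\<gamma> b')"
        using theta_fac_moeb_mat[OF M that(3)] by metis
    qed simp
    also have "\<dots> = theta_partial a' b' z' F * \<rho> F"
      unfolding theta_partial_def \<rho>_def prod.distrib[symmetric]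
      by (rule prod.cong) (simp_all add: mult.commute)
    finally show ?thesis .
  qed
  have c2: "finset_lim S' (\<lambda>F. theta_partial a b w (\<phi> ` F)) L2"
    using finset_lim_reindex[OF phi z(3)] .
  have c0: "finset_lim S' (\<lambda>F. theta_partial a b w0 (\<phi> ` F)) L0"
    using finset_lim_reindex[OF phi z0(3)] .
  have A: "finset_lim S' (\<lambda>F. theta_partial a b w (\<phi> ` F) * theta_partial a' b' z0 F) (L2 * L0')"
    using finset_lim_mult[OF c2 z0(2)] .
  have B: "finset_lim S' (\<lambda>F. theta_partial a' b' z F * theta_partial a b w0 (\<phi> ` F)) (L1 * L0)"
    using finset_lim_mult[OF z(2) c0] .
  have "finset_lim S' (\<lambda>F. theta_partial a b w (\<phi> ` F) * theta_partial a' b' z0 F) (L1 * L0)"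
  proof (subst finset_lim_cong)
    show "theta_partial a b w (\<phi> ` F) * theta_partial a' b' z0 F
        = theta_partial a' b' z F * theta_partial a b w0 (\<phi> ` F)" if "finite F" "F \<subseteq> S'" for F
      using key[OF that z(1)] key[OF that z0(1)] by (simp add: ac_simps)
  qed (rule B)
  then have "L2 * L0' = L1 * L0" using A finset_lim_unique by blast
  then show ?thesis using z0(4) by (simp add: field_simps)
qed

end

context cyclic_schottky
begin

lemma finite_theta_fac_far:
  assumes "a \<in> \<Omega>" "b \<in> \<Omega>" "Some z \<in> \<Omega>" "e > 0"
  shows "finite {\<gamma>\<in>\<Gamma>. e \<le> v (theta_fac z (\<gamma> a) (\<gamma> b) - 1)}"
proof -
  obtain e1 where e1: "e1 > 0" "finite {\<gamma>\<in>\<Gamma>. chord v (\<gamma> a) None < e1}"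
    using finite_orbit_near inf_ordinary by blast
  obtain e2 where e2: "e2 > 0" "finite {\<gamma>\<in>\<Gamma>. chord v (\<gamma> b) None < e2}"
    using finite_orbit_near inf_ordinary by blast
  obtain e3 where e3: "e3 > 0" "finite {\<gamma>\<in>\<Gamma>. chord v (\<gamma> b) (Some z) < e3}"
    using finite_orbit_near assms(3) by blast
  have e4: "finite {\<gamma>\<in>\<Gamma>. e * e1 * e2 * e3 \<le> chord v (\<gamma> a) (\<gamma> b)}"
    using finite_chord_ge assms e1 e2 e3 by simp
  have "{\<gamma>\<in>\<Gamma>. e \<le> v (theta_fac z (\<gamma> a) (\<gamma> b) - 1)} \<subseteq>
     {\<gamma>\<in>\<Gamma>. chord v (\<gamma> a) None < e1} \<union> {\<gamma>\<in>\<Gamma>. chord v (\<gamma> b) None < e2} \<union>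
     {\<gamma>\<in>\<Gamma>. chord v (\<gamma> b) (Some z) < e3} \<union> {\<gamma>\<in>\<Gamma>. e * e1 * e2 * e3 \<le> chord v (\<gamma> a) (\<gamma> b)}"
  proof
    fix \<gamma>
    assume \<gamma>: "\<gamma> \<in> {\<gamma>\<in>\<Gamma>. e \<le> v (theta_fac z (\<gamma> a) (\<gamma> b) - 1)}"
    show "\<gamma> \<in> {\<gamma>\<in>\<Gamma>. chord v (\<gamma> a) None < e1} \<union> {\<gamma>\<in>\<Gamma>. chord v (\<gamma> b) None < e2} \<union>
     {\<gamma>\<in>\<Gamma>. chord v (\<gamma> b) (Some z) < e3} \<union> {\<gamma>\<in>\<Gamma>. e * e1 * e2 * e3 \<le> chord v (\<gamma> a) (\<gamma> b)}"
    proof (rule ccontr)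
      assume "\<not> ?thesis"
      then have "v (theta_fac z (\<gamma> a) (\<gamma> b) - 1) < e"
        using \<gamma> by (intro v_theta_fac_diff_one_less[OF assms(4) e1(1) e2(1) e3(1)]) auto
      then show False using \<gamma> by simp
    qed
  qed
  then show ?thesis using e1 e2 e3 e4 by (meson finite_Un finite_subset)
qed

lemma theta_partial_converges:
  assumes "a \<in> \<Omega>" "b \<in> \<Omega>" "Some z \<in> \<Omega>" "S \<subseteq> \<Gamma>"
  shows "\<exists>L. finset_lim S (theta_partial a b z) L \<and> ((\<forall>\<gamma>\<in>S. \<gamma> a \<noteq> Some z \<and> \<gamma> b \<noteq> Some z) \<longrightarrow> L \<noteq> 0)"
proof -
  have fin: "finite {\<gamma>\<in>S. e \<le> v (theta_fac z (\<gamma> a) (\<gamma> b) - 1)}" if "e > 0" for e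
    by (rule finite_subset[OF _ finite_theta_fac_far[OF assms(1-3) that]]) (use assms(4) in blast)
  obtain L where L: "finset_lim S (\<lambda>F. \<Prod>\<gamma>\<in>F. theta_fac z (\<gamma> a) (\<gamma> b)) L"
    "(\<forall>\<gamma>\<in>S. theta_fac z (\<gamma> a) (\<gamma> b) \<noteq> 0) \<longrightarrow> L \<noteq> 0"
    using finset_lim_prod_exists[OF complete fin] by blast
  have "theta_fac z (\<gamma> a) (\<gamma> b) \<noteq> 0" if "\<gamma> a \<noteq> Some z" "\<gamma> b \<noteq> Some z" for \<gamma>
    using that unfolding theta_fac_def by (auto split: option.splits)
  then show ?thesis using L unfolding theta_partial_def by (metis (no_types, lifting) ext)
qed

lemma Theta_eqI:
  assumes "finset_lim \<Gamma> (theta_partial a b z) L"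
  shows "Theta v \<Gamma> a b z = L"
proof -
  have th: "theta_has v \<Gamma> a b z = finset_lim \<Gamma> (theta_partial a b z)"
    unfolding theta_has_def finset_lim_def theta_partial_def by (simp add: fun_eq_iff)
  show ?thesis unfolding Theta_def th using assms finset_lim_unique by blast
qed

end

section \<open>No element of \<open>\<Gamma>\<close> conjugates \<open>\<sigma> i\<close> to \<open>\<sigma> j\<close>\<close>

lemma not_successively_split:
  assumes "\<not> successively P xs"
  shows "\<exists>ys a b zs. xs = ys @ a # b # zs \<and> \<not> P a b"
  using assms
proof (induction xs rule: induct_list012)
  case (3 x y zs)
  show ?case
  proof (cases "P x y")
    case True
    then obtain ys a b zs' where "y # zs = ys @ a # b # zs' \<and> \<not> P a b" using 3 by auto
    then show ?thesis by (metis append_Cons)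
  next
    case False
    then show ?thesis by (metis append_Nil)
  qed
qed auto

lemma word_cases:
  fixes w :: "(nat \<times> nat) list"
  obtains (trivial) ys l zs where "w = ys @ (l, 0) # zs"
    | (mergeable) ys l k1 k2 zs where "w = ys @ (l, k1) # (l, k2) # zs"
    | (reduced) "\<forall>(l, k)\<in>set w. 0 < k" "successively (\<lambda>x y. fst x \<noteq> fst y) w"
proof (cases "\<exists>x\<in>set w. snd x = 0")
  case True
  then obtain ys x zs where x: "w = ys @ x # zs" "snd x = 0"
    using split_list_prop[OF True] by blast
  then show ?thesis
    by (intro that(1)[of ys "fst x" zs]) (cases x, simp)
next
  case no_trivial: False
  show ?thesis
  proof (cases "successively (\<lambda>x y. fst x \<noteq> fst y) w")
    case True
    then show ?thesis
      by (intro that(3)) (use no_trivial in auto)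
  next
    case False
    then obtain ys a b zs where "w = ys @ a # b # zs" "fst a = fst b"
      using not_successively_split[OF False] by blast
    then show ?thesis
      by (intro that(2)[of ys "fst a" "snd a" "snd b" zs]) (cases a, cases b, simp)
  qed
qed

context cyclic_schottky
begin

definition word_val :: "(nat \<times> nat) list \<Rightarrow> 'k option \<Rightarrow> 'k option" where
  "word_val w = foldr (\<lambda>(l, k) f. (\<sigma> l ^^ k) \<circ> f) w id"

definition exp_sum :: "nat \<Rightarrow> (nat \<times> nat) list \<Rightarrow> nat" where
  "exp_sum i w = sum_list (map (\<lambda>(l, k). if l = i then k else 0) w)"

definition word_in_range :: "(nat \<times> nat) list \<Rightarrow> bool" where
  "word_in_range w \<longleftrightarrow> (\<forall>(l, k)\<in>set w. l \<le> s)"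

lemma word_val_simps [simp]:
  "word_val [] = id" "word_val ((l, k) # w) = (\<sigma> l ^^ k) \<circ> word_val w"
  by (simp_all add: word_val_def)

lemma word_val_append: "word_val (w1 @ w2) = word_val w1 \<circ> word_val w2"
  by (induction w1) (auto simp: word_val_def)

lemma exp_sum_simps [simp]:
  "exp_sum i [] = 0" "exp_sum i ((l, k) # w) = (if l = i then k else 0) + exp_sum i w"
  by (simp_all add: exp_sum_def)

lemma exp_sum_append: "exp_sum i (w1 @ w2) = exp_sum i w1 + exp_sum i w2"
  by (simp add: exp_sum_def)

lemma sigma_funpow_mod:
  assumes "l \<le> s"
  shows "\<sigma> l ^^ (k mod p) = \<sigma> l ^^ k"
proof -
  have "\<sigma> l ^^ k = \<sigma> l ^^ (k mod p + p * (k div p))" by simp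
  also have "\<dots> = \<sigma> l ^^ (k mod p) \<circ> (\<sigma> l ^^ p) ^^ (k div p)"
    by (simp only: funpow_add funpow_mult)
  finally show ?thesis using sigma_pow_p[OF assms] by simp
qed

lemma inv_sigma:
  assumes "l \<le> s"
  shows "inv (\<sigma> l) = \<sigma> l ^^ (p - 1)"
proof -
  have p: "p = Suc (p - 1)" using p_ge_2 by simp
  have "\<sigma> l ^^ (p - 1) \<circ> \<sigma> l = id" "\<sigma> l \<circ> \<sigma> l ^^ (p - 1) = id"
    using sigma_pow_p[OF assms] p by (metis funpow_Suc_right, metis funpow.simps(2))
  then show ?thesis by (metis inv_unique_comp)
qed

lemma word_val_mod_p: "word_in_range w \<Longrightarrow> word_val (map (\<lambda>(l, k). (l, k mod p)) w) = word_val w"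
  by (induction w) (auto simp: word_in_range_def sigma_funpow_mod)

lemma exp_sum_mod_p: "exp_sum i (map (\<lambda>(l, k). (l, k mod p)) w) mod p = exp_sum i w mod p"
proof (induction w)
  case (Cons x w)
  obtain l k where x: "x = (l, k)" by (cases x)
  have "(if l = i then k mod p else 0) mod p = (if l = i then k else 0) mod p" by simp
  from mod_add_cong[OF this Cons.IH] show ?case using x by simp
qed simp

text \<open>The exponent sum of each generator modulo \<open>p\<close> is an invariant of the element
  represented: reduce exponents modulo \<open>p\<close>, then delete trivial letters and merge
  neighbouring letters with the same index; a word that admits neither step is reduced,
  and by the free product structure it represents the identity only if it is empty.\<close>

lemma exp_sum_mod_eq_0:
  assumes "word_in_range w" "word_val w = id"
  shows "exp_sum i w mod p = 0"
  using assms
proof (induction "length w" arbitrary: w rule: less_induct)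
  case less
  define w' where "w' = map (\<lambda>(l, k). (l, k mod p)) w"
  have w': "word_in_range w'" "word_val w' = id" "exp_sum i w' mod p = exp_sum i w mod p"
    using less.prems word_val_mod_p exp_sum_mod_p unfolding w'_def by (auto simp: word_in_range_def)
  have len: "length w' = length w" unfolding w'_def by simp
  have small: "\<forall>(l, k)\<in>set w'. k < p" unfolding w'_def using p_ge_2 by auto
  have shorter: "exp_sum i w mod p = 0"
    if "length u < length w'" "word_in_range u" "word_val u = word_val w'"
      "exp_sum i u mod p = exp_sum i w' mod p" for u
    using less.hyps[of u] that w' len by simp
  show ?case
  proof (cases rule: word_cases[of w'])
    case (trivial ys l zs)
    then show ?thesis
      using w'(1)
      by (intro shorter[of "ys @ zs"]) (auto simp: word_in_range_def word_val_append exp_sum_append)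
  next
    case (mergeable ys l k1 k2 zs)
    then show ?thesis
      using w'(1)
      by (intro shorter[of "ys @ (l, k1 + k2) # zs"])
         (auto simp: word_in_range_def word_val_append exp_sum_append funpow_add comp_assoc
           add.assoc)
  next
    case reduced
    have "w' = []"
    proof (rule ccontr)
      assume "w' \<noteq> []"
      moreover have "\<forall>(l, k)\<in>set w'. l \<le> s \<and> 0 < k \<and> k < p"
        using reduced(1) small w'(1) by (auto simp: word_in_range_def)
      moreover have "\<forall>n. Suc n < length w' \<longrightarrow> fst (w' ! n) \<noteq> fst (w' ! Suc n)"
        using reduced(2) by (simp add: successively_conv_nth)
      ultimately have "word_val w' \<noteq> id"
        using free_prod unfolding free_product_cyclic_def word_val_def by blast
      then show False using w'(2) by simp
    qed
    then show ?thesis using w'(3) by simp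
  qed
qed

lemma word_of_mgen:
  assumes "f \<in> mgen (\<sigma> ` {0..s})"
  shows "\<exists>w. word_in_range w \<and> f = word_val w"
  using assms
proof (induction f rule: mgen.induct)
  case gen_id
  then show ?case by (intro exI[of _ "[]"]) (simp add: word_in_range_def)
next
  case (gen_mul f g)
  then obtain w l where "word_in_range w" "g = word_val w" "l \<le> s" "f = \<sigma> l" by auto
  then show ?case by (intro exI[of _ "(l, 1) # w"]) (auto simp: word_in_range_def)
next
  case (gen_inv f g)
  then obtain w l where "word_in_range w" "g = word_val w" "l \<le> s" "f = \<sigma> l" by auto
  then show ?case
    using inv_sigma by (intro exI[of _ "(l, p - 1) # w"]) (auto simp: word_in_range_def)
qed

definition word_inv :: "(nat \<times> nat) list \<Rightarrow> (nat \<times> nat) list" where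
  "word_inv w = rev (map (\<lambda>(l, k). (l, (p - 1) * k)) w)"

lemma word_inv_Nil [simp]: "word_inv [] = []"
  by (simp add: word_inv_def)

lemma word_inv_Cons [simp]: "word_inv ((l, k) # w) = word_inv w @ [(l, (p - 1) * k)]"
  by (simp add: word_inv_def)

lemma word_in_range_word_inv: "word_in_range w \<Longrightarrow> word_in_range (word_inv w)"
  by (auto simp: word_inv_def word_in_range_def)

lemma exp_sum_word_inv: "exp_sum i (word_inv w) = (p - 1) * exp_sum i w"
  by (induction w) (auto simp: exp_sum_append distrib_left)

lemma word_val_word_inv: "word_in_range w \<Longrightarrow> word_val (word_inv w) \<circ> word_val w = id"
proof (induction w)
  case (Cons x w)
  obtain l k where x: "x = (l, k)" by (cases x)
  have ok: "word_in_range w" "l \<le> s" using Cons.prems x unfolding word_in_range_def by auto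
  have "(p - 1) * k + k = p * k" using p_ge_2 by (simp add: algebra_simps)
  then have "\<sigma> l ^^ ((p - 1) * k) \<circ> \<sigma> l ^^ k = \<sigma> l ^^ (p * k)"
    by (simp only: funpow_add[symmetric])
  also have "\<dots> = (\<sigma> l ^^ p) ^^ k" by (simp only: funpow_mult)
  finally have "\<sigma> l ^^ ((p - 1) * k) \<circ> \<sigma> l ^^ k = id"
    using sigma_pow_p[OF ok(2)] by simp
  moreover have "word_val (word_inv (x # w)) \<circ> word_val (x # w)
      = word_val (word_inv w) \<circ> (\<sigma> l ^^ ((p - 1) * k) \<circ> \<sigma> l ^^ k) \<circ> word_val w"
    using x by (simp add: word_val_append comp_assoc)
  ultimately show ?case using Cons.IH[OF ok(1)] by simp
qed simp

text \<open>The word for \<open>\<gamma> \<circ> \<sigma> i \<circ> inv \<gamma> \<circ> inv (\<sigma> j)\<close> has exponent sum \<open>1\<close> in \<open>\<sigma> i\<close> modulo \<open>p\<close>.\<close>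

lemma sigma_not_conjugate:
  assumes "\<gamma> \<in> \<Gamma>" "i \<le> s" "j \<le> s" "i \<noteq> j"
  shows "\<gamma> \<circ> \<sigma> i \<circ> inv \<gamma> \<noteq> \<sigma> j"
proof
  assume conj: "\<gamma> \<circ> \<sigma> i \<circ> inv \<gamma> = \<sigma> j"
  have "\<gamma> \<in> mgen (\<sigma> ` {0..s})"
    using assms(1) free_prod mgen_gen[of \<gamma> "\<Gamma> \<union> {\<sigma> 0}"] unfolding free_product_cyclic_def by auto
  then obtain w where w: "word_in_range w" "\<gamma> = word_val w" using word_of_mgen by blast
  have "word_val (word_inv w) = word_val (word_inv w) \<circ> \<gamma> \<circ> inv \<gamma>"
    using bij_Gamma[OF assms(1)] by (simp add: comp_assoc)
  then have inv_\<gamma>: "inv \<gamma> = word_val (word_inv w)"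
    using word_val_word_inv[OF w(1)] w(2) by simp
  define W where "W = w @ [(i, 1)] @ word_inv w @ [(j, p - 1)]"
  have "word_in_range W"
    unfolding W_def using w(1) word_in_range_word_inv[OF w(1)] assms(2,3)
    by (auto simp: word_in_range_def)
  moreover have "word_val W = (\<gamma> \<circ> \<sigma> i \<circ> inv \<gamma>) \<circ> inv (\<sigma> j)"
    unfolding W_def using w(2) inv_\<gamma> inv_sigma[OF assms(3)]
    by (simp add: word_val_append comp_assoc)
  then have "word_val W = id" using conj bij_sigma[OF assms(3)] by simp
  ultimately have "exp_sum i W mod p = 0" by (rule exp_sum_mod_eq_0)
  moreover have "exp_sum i W = 1 + p * exp_sum i w"
    unfolding W_def using exp_sum_word_inv assms(4) p_ge_2
    by (simp add: exp_sum_append algebra_simps)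
  then have "exp_sum i W mod p = 1"
    using p_ge_2 by (simp only: mod_mult_self2) simp
  ultimately show False by simp
qed

end

context cyclic_schottky
begin

lemma sigma_ordinary:
  assumes "l \<le> s" "x \<in> \<Omega>"
  shows "\<sigma> l x \<in> \<Omega>"
  using ordinary_moeb_mat[OF det2_sigma_mat[OF assms(1)] assms(2)] sigma_conj(2)[OF assms(1)]
  unfolding sigma_eq_moeb_mat[OF assms(1)] .

lemma inv_sigma_ordinary:
  assumes "l \<le> s" "x \<in> \<Omega>"
  shows "inv (\<sigma> l) x \<in> \<Omega>"
proof -
  let ?S = "sigma_mat l"
  let ?N = "adj2 ?S"
  have S: "\<sigma> l = moeb_mat ?S" "det2 ?S \<noteq> 0"
    using sigma_eq_moeb_mat det2_sigma_mat assms(1) by auto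
  then have N: "det2 ?N \<noteq> 0" "inv (\<sigma> l) = moeb_mat ?N" "inv (moeb_mat ?N) = \<sigma> l"
    using inv_sigma_eq_moeb_mat[OF assms(1)] inv_moeb_mat[of ?N] by simp_all
  then show ?thesis
    using ordinary_moeb_mat[OF N(1) assms(2)] sigma_conj(1)[OF assms(1)] by simp
qed

lemma inj_orbit:
  assumes "\<gamma> \<in> \<Gamma>" "\<gamma> \<noteq> id" "x \<in> \<Omega>"
  shows "inj (\<lambda>n. (\<gamma> ^^ n) x)"
proof (rule injI)
  fix m n
  assume eq: "(\<gamma> ^^ m) x = (\<gamma> ^^ n) x"
  have bij: "bij (\<gamma> ^^ m)" using bij_Gamma[OF Gamma_funpow[OF assms(1)]] .
  have "inv (\<gamma> ^^ m) \<circ> \<gamma> ^^ n \<in> \<Gamma>"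
    using assms(1) by (intro Gamma_comp Gamma_inv Gamma_funpow)
  moreover have "(inv (\<gamma> ^^ m) \<circ> \<gamma> ^^ n) x = x"
    using bij by (simp add: eq[symmetric])
  ultimately have "inv (\<gamma> ^^ m) \<circ> \<gamma> ^^ n = id"
    using Gamma_fix_ordinary_imp_id assms(3) by blast
  moreover have "\<gamma> ^^ n = \<gamma> ^^ m \<circ> (inv (\<gamma> ^^ m) \<circ> \<gamma> ^^ n)"
    using bij by (simp add: comp_assoc[symmetric])
  ultimately have "\<gamma> ^^ m = \<gamma> ^^ n" by simp
  show "m = n"
  proof (rule ccontr)
    assume "m \<noteq> n"
    then consider "m < n" | "n < m" by linarith
    then show False
    proof cases
      case 1
      then show False
        using Gamma_funpow_eq_imp_id[OF assms(1) _ \<open>\<gamma> ^^ m = \<gamma> ^^ n\<close>] assms(2) by simp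
    next
      case 2
      then show False
        using Gamma_funpow_eq_imp_id[OF assms(1) _ \<open>\<gamma> ^^ m = \<gamma> ^^ n\<close>[symmetric]] assms(2) by simp
    qed
  qed
qed

lemma fixed_pair_stabilizer_trivial:
  assumes "i \<le> s" "\<gamma> \<in> \<Gamma>" "x \<in> {ofix i, efix i}" "y \<in> {ofix i, efix i}" "\<gamma> x = y"
  shows "\<gamma> = id"
proof -
  have bij: "bij \<gamma>" "bij (\<sigma> i)" using bij_Gamma assms(2) bij_sigma assms(1) by auto
  have fixed: "\<sigma> i x = x" "\<sigma> i y = y" using assms(1,3,4) sigma_ofix sigma_efix by auto
  have ordinary: "x \<in> \<Omega>" "y \<in> \<Omega>" using assms(1,3,4) ofix_ordinary efix_ordinary by auto
  define \<psi> where "\<psi> = \<gamma> \<circ> (\<sigma> i \<circ> inv \<gamma> \<circ> inv (\<sigma> i))"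
  have "\<psi> \<in> \<Gamma>"
    unfolding \<psi>_def
    using sigma_conj(1)[OF assms(1) Gamma_inv[OF assms(2)]] assms(2) Gamma_comp by blast
  moreover have "\<psi> y = y"
    unfolding \<psi>_def using bij inv_sigma_fixed[OF assms(1) fixed(2)] fixed(1) assms(5) by auto
  ultimately have "\<psi> = id" using Gamma_fix_ordinary_imp_id ordinary(2) by blast
  have "\<gamma> (\<sigma> i z) = \<sigma> i (\<gamma> z)" for z
  proof -
    have "\<psi> (\<sigma> i (\<gamma> z)) = \<gamma> (\<sigma> i z)" unfolding \<psi>_def using bij by simp
    then show ?thesis using \<open>\<psi> = id\<close> by simp
  qed
  then have "\<sigma> i (\<gamma> y) = \<gamma> y" using fixed(2) by metis
  then have "\<gamma> y \<in> {ofix i, efix i}"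
    using sigma_fixed_points[OF assms(1)] by blast
  show ?thesis
  proof (cases "\<gamma> y = y")
    case True
    then show ?thesis using Gamma_fix_ordinary_imp_id[OF assms(2) ordinary(2)] by simp
  next
    case False
    text \<open>Then \<open>\<gamma>\<close> swaps the two fixed points, so \<open>\<gamma> \<circ> \<gamma>\<close> fixes \<open>x\<close>.\<close>
    then have "\<gamma> y = x" using \<open>\<gamma> y \<in> {ofix i, efix i}\<close> assms(3,4,5) by auto
    then have "(\<gamma> \<circ> \<gamma>) x = x" using assms(5) by simp
    then have "\<gamma> ^^ 2 = id"
      using Gamma_fix_ordinary_imp_id[OF Gamma_comp[OF assms(2) assms(2)] ordinary(1)]
      by (simp add: numeral_2_eq_2)
    then show ?thesis using Gamma_torsion_free[OF assms(2), of 2] by simp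
  qed
qed

lemma orbit_avoids_fixed_points:
  assumes "i \<le> s" "j \<le> s" "i \<noteq> j" "\<gamma> \<in> \<Gamma>" "x \<in> {ofix i, efix i}" "f \<in> {ofix j, efix j}"
  shows "\<gamma> x \<noteq> f"
proof
  assume hit: "\<gamma> x = f"
  have bij: "bij \<gamma>" "bij (\<sigma> i)" "bij (\<sigma> j)" using bij_Gamma assms(4) bij_sigma assms(1,2) by auto
  have fixed: "\<sigma> i x = x" "\<sigma> j f = f" using assms(1,2,5,6) sigma_ofix sigma_efix by auto
  have "f \<in> \<Omega>" using assms(2,6) ofix_ordinary efix_ordinary by auto
  define \<psi> where "\<psi> = \<gamma> \<circ> \<sigma> i \<circ> inv \<gamma> \<circ> inv (\<sigma> j)"
  have "\<psi> = \<gamma> \<circ> (\<sigma> i \<circ> inv \<gamma> \<circ> inv (\<sigma> i)) \<circ> (\<sigma> i \<circ> inv (\<sigma> j))"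
    unfolding \<psi>_def using bij by (simp add: fun_eq_iff)
  then have "\<psi> \<in> \<Gamma>"
    using sigma_conj(1)[OF assms(1) Gamma_inv[OF assms(4)]] assms(4) Gamma_comp
      sigma_comp_inv_sigma[OF assms(1,2)] by simp
  moreover have "\<psi> f = f"
    unfolding \<psi>_def using bij inv_sigma_fixed[OF assms(2) fixed(2)] fixed(1) hit by auto
  ultimately have "\<psi> = id" using Gamma_fix_ordinary_imp_id \<open>f \<in> \<Omega>\<close> by blast
  moreover have "\<gamma> \<circ> \<sigma> i \<circ> inv \<gamma> = \<psi> \<circ> \<sigma> j"
    unfolding \<psi>_def using bij by (simp add: fun_eq_iff)
  ultimately have "\<gamma> \<circ> \<sigma> i \<circ> inv \<gamma> = \<sigma> j" by simp
  then show False using sigma_not_conjugate assms by blast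
qed

end

section \<open>The automorphy factor\<close>

locale cyclic_schottky_pair = cyclic_schottky +
  fixes i j :: nat
  assumes ij: "i \<le> s" "j \<le> s" "i \<noteq> j"
begin

abbreviation "a \<equiv> ofix i"
abbreviation "b \<equiv> efix i"
abbreviation "Th \<equiv> Theta v \<Gamma> a b"
abbreviation "gij \<equiv> \<sigma> i \<circ> inv (\<sigma> j)"

lemma a_ordinary: "a \<in> \<Omega>" and b_ordinary: "b \<in> \<Omega>"
  using ofix_ordinary efix_ordinary ij by auto

lemma finset_lim_Theta: "Some z \<in> \<Omega> \<Longrightarrow> finset_lim \<Gamma> (theta_partial a b z) (Th z)"
  using theta_partial_converges[OF a_ordinary b_ordinary] Theta_eqI by blast

lemma Theta_nonzero:
  assumes "Some z \<in> \<Omega>" "\<forall>\<gamma>\<in>\<Gamma>. \<gamma> a \<noteq> Some z \<and> \<gamma> b \<noteq> Some z"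
  shows "Th z \<noteq> 0"
  using theta_partial_converges[OF a_ordinary b_ordinary assms(1), of \<Gamma>] assms(2) Theta_eqI by blast

definition Theta_rest where
  "Theta_rest z = (THE L. finset_lim (\<Gamma> - {id}) (theta_partial a b z) L)"

lemma finset_lim_Theta_rest:
  assumes "Some z \<in> \<Omega>"
  shows "finset_lim (\<Gamma> - {id}) (theta_partial a b z) (Theta_rest z)"
proof -
  obtain L where L: "finset_lim (\<Gamma> - {id}) (theta_partial a b z) L"
    using theta_partial_converges[OF a_ordinary b_ordinary assms, of "\<Gamma> - {id}"] by blast
  then have "Theta_rest z = L" unfolding Theta_rest_def using finset_lim_unique by blast
  then show ?thesis using L by simp
qed

lemma Theta_rest_nonzero:
  assumes "Some z \<in> \<Omega>" "\<forall>\<gamma>\<in>\<Gamma> - {id}. \<gamma> a \<noteq> Some z \<and> \<gamma> b \<noteq> Some z"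
  shows "Theta_rest z \<noteq> 0"
  using theta_partial_converges[OF a_ordinary b_ordinary assms(1), of "\<Gamma> - {id}"] assms(2)
    finset_lim_Theta_rest[OF assms(1)] finset_lim_unique by blast

lemma Theta_eq_factor_rest:
  assumes "Some z \<in> \<Omega>"
  shows "Th z = theta_fac z a b * Theta_rest z"
proof -
  have "finset_lim \<Gamma> (theta_partial a b z) (theta_fac z a b * Theta_rest z)"
  proof (rule finset_lim_insert[OF finset_lim_Theta_rest[OF assms] Gamma_id])
    fix F
    assume "finite F" "id \<in> F" "F \<subseteq> \<Gamma>"
    then show "theta_partial a b z F = theta_fac z a b * theta_partial a b z (F - {id})"
      unfolding theta_partial_def by (simp add: prod.remove)
  qed
  then show ?thesis using Theta_eqI by simp
qed

lemma sigma_i_fixes_a_b: "\<sigma> i a = a" "\<sigma> i b = b"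
  using sigma_ofix sigma_efix ij by auto

text \<open>Conjugation by \<open>\<sigma> i\<close> permutes \<open>\<Gamma> - {id}\<close> and \<open>\<sigma> i\<close> fixes \<open>a\<close> and \<open>b\<close>, so \<open>Theta_rest\<close>
  is \<open>\<sigma> i\<close>-invariant (compare with its nonzero value at \<open>a\<close> or \<open>b\<close>); the identity factor
  picks up the multiplier ratio of \<open>\<sigma> i\<close>.\<close>

lemma Theta_sigma_i:
  assumes "Some z \<in> \<Omega>" "\<sigma> i (Some z) = Some w"
  shows "Th w = \<zeta> powi \<nu> i * Th z"
proof -
  let ?S = "sigma_mat i"
  have S: "det2 ?S \<noteq> 0" "\<sigma> i = moeb_mat ?S" using det2_sigma_mat sigma_eq_moeb_mat ij by auto
  define \<phi> where "\<phi> \<gamma> = \<sigma> i \<circ> \<gamma> \<circ> inv (\<sigma> i)" for \<gamma>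
  define \<psi> where "\<psi> \<gamma> = inv (\<sigma> i) \<circ> \<gamma> \<circ> \<sigma> i" for \<gamma>
  have inverse: "\<psi> (\<phi> \<gamma>) = \<gamma>" "\<phi> (\<psi> \<gamma>) = \<gamma>" "\<phi> id = id" "\<psi> id = id" for \<gamma>
    unfolding \<phi>_def \<psi>_def using bij_sigma ij by (simp_all add: fun_eq_iff)
  have conj: "\<phi> \<gamma> \<in> \<Gamma>" "\<psi> \<gamma> \<in> \<Gamma>" if "\<gamma> \<in> \<Gamma>" for \<gamma>
    unfolding \<phi>_def \<psi>_def using sigma_conj[OF ij(1) that] by auto
  have nonid: "\<phi> \<gamma> \<noteq> id" "\<psi> \<gamma> \<noteq> id" if "\<gamma> \<noteq> id" for \<gamma>
    using that inverse(1,2)[of \<gamma>] inverse(3,4) by auto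
  have bij: "bij_betw \<phi> (\<Gamma> - {id}) (\<Gamma> - {id})"
    by (rule bij_betw_byWitness[where f' = \<psi>]) (use inverse conj nonid in auto)
  have compatible: "moeb_mat ?S (\<gamma> a) = \<phi> \<gamma> a \<and> moeb_mat ?S (\<gamma> b) = \<phi> \<gamma> b" for \<gamma>
    unfolding \<phi>_def S(2)[symmetric] using sigma_i_fixes_a_b inv_sigma_fixed ij by simp
  obtain c where c: "Some c \<in> {a, b}"
    using ofix_ne_efix[OF ij(1)] by (cases a; cases b) auto
  have c_ordinary: "Some c \<in> \<Omega>" using c a_ordinary b_ordinary by auto
  have c_fixed: "moeb_mat ?S (Some c) = Some c" using c sigma_i_fixes_a_b S(2) by auto
  have c_nonzero: "Theta_rest c \<noteq> 0"
    using fixed_pair_stabilizer_trivial[OF ij(1)] c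
    by (intro Theta_rest_nonzero[OF c_ordinary]) blast
  have w_ordinary: "Some w \<in> \<Omega>" using sigma_ordinary[OF ij(1) assms(1)] assms(2) by simp
  have "Theta_rest w = Theta_rest z * (Theta_rest c / Theta_rest c)"
    by (rule theta_transform_ratio[OF S(1) bij compatible c_fixed finset_lim_Theta_rest[OF c_ordinary]
          finset_lim_Theta_rest[OF c_ordinary] c_nonzero _ finset_lim_Theta_rest[OF assms(1)]
          finset_lim_Theta_rest[OF w_ordinary]])
       (use assms(2) S(2) in simp)
  then have rest: "Theta_rest w = Theta_rest z" using \<open>Theta_rest c \<noteq> 0\<close> by simp
  have "theta_fac w a b = theta_fac w (moeb_mat ?S a) (moeb_mat ?S b)"
    using sigma_i_fixes_a_b S(2) by simp
  also have "\<dots> = (hscale ?S a / hscale ?S b) * theta_fac z a b"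
    by (rule theta_fac_moeb_mat[OF S(1)]) (use assms(2) S(2) in simp)
  also have "\<dots> = \<zeta> powi \<nu> i * theta_fac z a b"
    using hscale_ratio_fixed_points[OF ij(1)] by simp
  finally show ?thesis
    using Theta_eq_factor_rest assms(1) w_ordinary rest by simp
qed

lemma Theta_nonzero_at_orbit:
  assumes "Some f \<in> {ofix j, efix j}" "\<gamma> \<in> \<Gamma>" "Some z = \<gamma> (Some f)"
  shows "Th z \<noteq> 0"
proof (rule Theta_nonzero)
  show "Some z \<in> \<Omega>"
    using assms ofix_ordinary efix_ordinary ij Gamma_ordinary by auto
  show "\<forall>\<delta>\<in>\<Gamma>. \<delta> a \<noteq> Some z \<and> \<delta> b \<noteq> Some z"
  proof (intro ballI)
    fix \<delta>
    assume "\<delta> \<in> \<Gamma>"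
    then have "inv \<gamma> \<circ> \<delta> \<in> \<Gamma>" using assms(2) Gamma_comp Gamma_inv by blast
    then have "inv \<gamma> (\<delta> a) \<noteq> Some f" "inv \<gamma> (\<delta> b) \<noteq> Some f"
      using orbit_avoids_fixed_points[OF ij, of "inv \<gamma> \<circ> \<delta>"] assms(1) by auto
    then show "\<delta> a \<noteq> Some z \<and> \<delta> b \<noteq> Some z"
      using assms(3) bij_Gamma[OF assms(2)] by auto
  qed
qed

text \<open>Conjugation by \<open>\<sigma> j\<close> followed by right multiplication with \<open>inv (\<sigma> j) \<circ> \<sigma> i \<in> \<Gamma>\<close>
  permutes \<open>\<Gamma>\<close> compatibly with \<open>inv (\<sigma> j)\<close> on the orbits of \<open>a\<close> and \<open>b\<close>; at a finite fixed point
  of \<open>\<sigma> j\<close> the theta function does not vanish.\<close>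

lemma Theta_inv_sigma_j:
  assumes "Some z \<in> \<Omega>" "inv (\<sigma> j) (Some z) = Some w"
  shows "Th w = Th z"
proof -
  let ?N = "adj2 (sigma_mat j)"
  have N: "det2 ?N \<noteq> 0" "inv (\<sigma> j) = moeb_mat ?N"
    using inv_sigma_eq_moeb_mat det2_sigma_mat ij by auto
  have bij: "bij (\<sigma> i)" "bij (\<sigma> j)" using bij_sigma ij by auto
  define g where "g = inv (\<sigma> j) \<circ> \<sigma> i"
  have "g = inv (\<sigma> j) \<circ> gij \<circ> \<sigma> j" unfolding g_def using bij by (simp add: fun_eq_iff)
  then have g: "g \<in> \<Gamma>" "bij g"
    using sigma_conj(2)[OF ij(2) sigma_comp_inv_sigma[OF ij(1,2)]] bij_Gamma by auto
  define \<phi> where "\<phi> \<gamma> = inv (\<sigma> j) \<circ> \<gamma> \<circ> \<sigma> j \<circ> g" for \<gamma>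
  define \<psi> where "\<psi> \<gamma> = \<sigma> j \<circ> (\<gamma> \<circ> inv g) \<circ> inv (\<sigma> j)" for \<gamma>
  have bij_\<phi>: "bij_betw \<phi> \<Gamma> \<Gamma>"
  proof (rule bij_betw_byWitness[where f' = \<psi>])
    show "\<forall>\<gamma>\<in>\<Gamma>. \<psi> (\<phi> \<gamma>) = \<gamma>" "\<forall>\<gamma>\<in>\<Gamma>. \<phi> (\<psi> \<gamma>) = \<gamma>"
      unfolding \<phi>_def \<psi>_def using bij g by (simp_all add: fun_eq_iff)
    show "\<phi> ` \<Gamma> \<subseteq> \<Gamma>" "\<psi> ` \<Gamma> \<subseteq> \<Gamma>"
      unfolding \<phi>_def \<psi>_def using sigma_conj[OF ij(2)] g Gamma_comp Gamma_inv by auto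
  qed
  have compatible: "moeb_mat ?N (\<gamma> a) = \<phi> \<gamma> a \<and> moeb_mat ?N (\<gamma> b) = \<phi> \<gamma> b" for \<gamma>
    unfolding \<phi>_def g_def N(2)[symmetric] using sigma_i_fixes_a_b bij by simp
  obtain f where f: "Some f \<in> {ofix j, efix j}"
    using ofix_ne_efix[OF ij(2)] by (cases "ofix j"; cases "efix j") auto
  have f_ordinary: "Some f \<in> \<Omega>" using f ofix_ordinary efix_ordinary ij by auto
  have f_fixed: "moeb_mat ?N (Some f) = Some f"
    using f inv_sigma_fixed[OF ij(2)] sigma_ofix sigma_efix ij N(2) by auto
  have f_nonzero: "Th f \<noteq> 0" using Theta_nonzero_at_orbit[OF f Gamma_id] by simp
  have w_ordinary: "Some w \<in> \<Omega>" using inv_sigma_ordinary[OF ij(2) assms(1)] assms(2) by simp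
  have "Th w = Th z * (Th f / Th f)"
    by (rule theta_transform_ratio[OF N(1) bij_\<phi> compatible f_fixed finset_lim_Theta[OF f_ordinary]
          finset_lim_Theta[OF f_ordinary] f_nonzero _ finset_lim_Theta[OF assms(1)]
          finset_lim_Theta[OF w_ordinary]])
       (use assms(2) N(2) in simp)
  then show ?thesis using f_nonzero by simp
qed

lemma gij_Gamma: "gij \<in> \<Gamma>"
  using sigma_comp_inv_sigma ij by blast

lemma gij_ne_id: "gij \<noteq> id"
proof
  assume "gij = id"
  then have "\<sigma> j = \<sigma> i"
    using bij_sigma[OF ij(2)] by (metis bij_inv_comp comp_assoc comp_id id_comp)
  then have "\<sigma> j a = a" using sigma_i_fixes_a_b by simp
  then have "a \<in> {ofix j, efix j}" using sigma_fixed_points[OF ij(2)] by blast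
  then show False using orbit_avoids_fixed_points[OF ij Gamma_id, of a a] by simp
qed

text \<open>The \<open>gij\<close>-orbit of a fixed point of \<open>\<sigma> j\<close> is infinite, so it avoids the three points
  where \<open>inv (\<sigma> j)\<close> or \<open>gij\<close> would give \<open>\<infinity>\<close>.\<close>

lemma base_point_exists:
  obtains q y w where "Some q \<in> \<Omega>" "inv (\<sigma> j) (Some q) = Some y" "gij (Some q) = Some w" "Th q \<noteq> 0"
proof -
  obtain f where f: "Some f \<in> {ofix j, efix j}"
    using ofix_ne_efix[OF ij(2)] by (cases "ofix j"; cases "efix j") auto
  have "Some f \<in> \<Omega>" using f ofix_ordinary efix_ordinary ij by auto
  then have "inj (\<lambda>n. (gij ^^ n) (Some f))"
    using inj_orbit gij_Gamma gij_ne_id by blast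
  then have "\<not> range (\<lambda>n. (gij ^^ n) (Some f)) \<subseteq> {None, \<sigma> j None, inv gij None}"
    using finite_subset range_inj_infinite by blast
  then obtain n where n: "(gij ^^ n) (Some f) \<notin> {None, \<sigma> j None, inv gij None}"
    unfolding image_subset_iff by blast
  then obtain q where q: "(gij ^^ n) (Some f) = Some q" by auto
  have bij: "bij (\<sigma> j)" "bij gij" using bij_sigma ij bij_Gamma gij_Gamma by auto
  have "inv (\<sigma> j) (Some q) \<noteq> None"
  proof
    assume "inv (\<sigma> j) (Some q) = None"
    then have "\<sigma> j None = Some q" using bij_apply_inv[OF bij(1), of "Some q"] by simp
    then show False using n q by auto
  qed
  moreover have "gij (Some q) \<noteq> None"
  proof
    assume "gij (Some q) = None"
    then have "inv gij None = Some q" using bij_inv_apply[OF bij(2), of "Some q"] by simp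
    then show False using n q by auto
  qed
  moreover have "Some q \<in> \<Omega>"
    unfolding q[symmetric] by (rule Gamma_ordinary[OF Gamma_funpow[OF gij_Gamma] \<open>Some f \<in> \<Omega>\<close>])
  moreover have "Th q \<noteq> 0"
    using Theta_nonzero_at_orbit[OF f Gamma_funpow[OF gij_Gamma] q[symmetric]] .
  ultimately show ?thesis using that by blast
qed

lemma Theta_gij:
  assumes "Some z \<in> \<Omega>" "gij (Some z) = Some w"
  shows "Th w = \<zeta> powi \<nu> i * Th z"
proof -
  obtain q y w0
    where q: "Some q \<in> \<Omega>" "inv (\<sigma> j) (Some q) = Some y" "gij (Some q) = Some w0" "Th q \<noteq> 0"
    using base_point_exists by blast
  let ?M = "norm_mat gij"
  have M: "det2 ?M \<noteq> 0" "gij = moeb_mat ?M" using norm_mat[OF gij_Gamma] by auto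
  have "gij (Some q) \<in> \<Omega>" "gij (Some z) \<in> \<Omega>"
    using Gamma_ordinary[OF gij_Gamma] q(1) assms(1) by blast+
  then have w_ordinary: "Some w0 \<in> \<Omega>" "Some w \<in> \<Omega>"
    by (simp_all only: q(3) assms(2))
  have w0: "Th w0 = \<zeta> powi \<nu> i * Th q"
  proof -
    have "Some y \<in> \<Omega>" using inv_sigma_ordinary[OF ij(2) q(1)] q(2) by simp
    moreover have "\<sigma> i (Some y) = Some w0" using q(2,3) by simp
    ultimately show ?thesis using Theta_sigma_i Theta_inv_sigma_j[OF q(1,2)] by simp
  qed
  have "Th w = Th z * (Th w0 / Th q)"
    by (rule theta_transform_ratio[OF M(1) bij_betw_Gamma_comp_left[OF gij_Gamma] _ _
          finset_lim_Theta[OF q(1)] finset_lim_Theta[OF w_ordinary(1)] q(4) _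
          finset_lim_Theta[OF assms(1)] finset_lim_Theta[OF w_ordinary(2)]])
       (use q(3) assms(2) M(2) in simp_all)
  then show ?thesis using w0 q(4) by simp
qed

lemma autfac_gij: "autfac v \<Gamma> a b gij = \<zeta> powi \<nu> i"
  unfolding autfac_def
proof (rule the_equality)
  show "\<forall>z w. Some z \<in> \<Omega> \<and> gij (Some z) = Some w \<longrightarrow> Th w = \<zeta> powi \<nu> i * Th z"
    using Theta_gij by blast
  obtain q y w where q: "Some q \<in> \<Omega>" "gij (Some q) = Some w" "Th q \<noteq> 0"
    using base_point_exists by blast
  fix c
  assume "\<forall>z w. Some z \<in> \<Omega> \<and> gij (Some z) = Some w \<longrightarrow> Th w = c * Th z"
  then have "c * Th q = \<zeta> powi \<nu> i * Th q" using Theta_gij q by metis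
  then show "c = \<zeta> powi \<nu> i" using q(3) by simp
qed

end

lemma free_basis_sigma_coset:
  assumes "free_basis \<Gamma> (\<lambda>(l, k). xi \<sigma> l k) ({1..s} \<times> {1..p - 1})" "2 \<le> p" "0 < l" "l \<le> s"
  shows "\<sigma> l \<circ> inv (\<sigma> 0) \<in> \<Gamma>"
proof -
  have "\<Gamma> = mgen ((\<lambda>(l, k). xi \<sigma> l k) ` ({1..s} \<times> {1..p - 1}))"
    using assms(1) unfolding free_basis_def by blast
  moreover have "xi \<sigma> l 1 \<in> (\<lambda>(l, k). xi \<sigma> l k) ` ({1..s} \<times> {1..p - 1})"
    by (rule rev_image_eqI[of "(l, 1)"]) (use assms(2-4) in auto)
  ultimately show ?thesis using mgen_gen[of "xi \<sigma> l 1"] by simp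
qed

theorem mainTheorem7:
  fixes v :: "'k::field_char_0 \<Rightarrow> real" and p :: nat and \<zeta> :: 'k
    and \<Gamma> :: "('k option \<Rightarrow> 'k option) set" and g s :: nat
    and \<sigma> \<upsilon> :: "nat \<Rightarrow> 'k option \<Rightarrow> 'k option" and \<nu> :: "nat \<Rightarrow> int"
    and i j :: nat
  assumes field: "complete_nonarch_acf v"
    and p_prime: "prime p"
    and zeta_root: "\<zeta> ^ p = 1" and zeta_prim: "\<forall>k. 0 < k \<and> k < p \<longrightarrow> \<zeta> ^ k \<noteq> 1"
    and schottky: "schottky v \<Gamma> g"
    and inf_ord: "None \<in> ordinary v \<Gamma>"
    and sigma0_norm: "\<sigma> 0 \<in> normalizer \<Gamma>"
    and sigma0_p: "\<sigma> 0 ^^ p = id"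
    and sigma0_prod: "\<forall>\<gamma>\<in>\<Gamma>. foldr (\<circ>) (map (\<lambda>k. (\<sigma> 0 ^^ k) \<circ> \<gamma> \<circ> inv (\<sigma> 0 ^^ k)) [0..<p]) id
                         \<in> commutator_subgroup \<Gamma>"
    and sigma_in: "\<forall>l\<le>s. \<sigma> l \<in> mgen (\<Gamma> \<union> {\<sigma> 0}) \<and> \<sigma> l ^^ p = id \<and> \<sigma> l \<noteq> id"
    and free_prod: "free_product_cyclic p (mgen (\<Gamma> \<union> {\<sigma> 0})) \<sigma> s"
    and xi_basis: "free_basis \<Gamma> (\<lambda>(l, k). xi \<sigma> l k) ({1..s} \<times> {1..p - 1})"
    and sigma_diag: "\<forall>l\<le>s. \<upsilon> l \<in> PGL2 \<and> \<sigma> l = inv (\<upsilon> l) \<circ> moeb (\<zeta> powi \<nu> l) 0 0 1 \<circ> \<upsilon> l"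
    and fixpts_ord: "\<forall>l\<le>s. inv (\<upsilon> l) (Some 0) \<in> ordinary v \<Gamma> \<and> inv (\<upsilon> l) None \<in> ordinary v \<Gamma>"
    and ij: "i \<le> s" "j \<le> s" "i \<noteq> j"
  shows "\<sigma> i \<circ> inv (\<sigma> j) \<in> \<Gamma> \<and>
         autfac v \<Gamma> (inv (\<upsilon> i) (Some 0)) (inv (\<upsilon> i) None) (\<sigma> i \<circ> inv (\<sigma> j)) = \<zeta> powi \<nu> i"
proof -
  have p: "2 \<le> p" using p_prime prime_ge_2_nat by blast
  have "\<zeta> \<noteq> 0" using zeta_root p by (cases p) auto
  interpret cyclic_schottky_pair v p \<zeta> \<Gamma> g s \<sigma> \<upsilon> \<nu> i j
  proof unfold_locales
    show "nonarch_abs v" "complete_wrt v" using field by (simp_all add: complete_nonarch_acf_def)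
    show "\<sigma> l ^^ p = id" if "l \<le> s" for l using sigma_in that by blast
    show "\<upsilon> l \<in> PGL2 \<and> \<sigma> l = inv (\<upsilon> l) \<circ> moeb (\<zeta> powi \<nu> l) 0 0 1 \<circ> \<upsilon> l" if "l \<le> s" for l
      using sigma_diag that by blast
    show "inv (\<upsilon> l) (Some 0) \<in> ordinary v \<Gamma> \<and> inv (\<upsilon> l) None \<in> ordinary v \<Gamma>" if "l \<le> s" for l
      using fixpts_ord that by blast
  qed (use p \<open>\<zeta> \<noteq> 0\<close> schottky inf_ord sigma0_norm free_basis_sigma_coset[OF xi_basis p]
      free_prod ij in auto)
  show ?thesis using gij_Gamma autfac_gij unfolding ofix_def efix_def by simp
qed

end
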